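(* Let the data $\eta,Q_g,Q_p,\Psi,c_{max},\theta_s,S$ be as in the context. Then there exists at least one $c\in[c_{max},0]$ for which the interface problem (P$_c$) described in the context admits a solution $\theta$, and every such $c$ lies in the open interval $(c_{max},0)$.
   Context: Dimensionless travelling-wave formulation of a solid-propellant combustion model ($x<0$ inert solid, $x>0$ gas, interface at $x=0$; $\theta$ dimensionless temperature; $c<0$ dimensionless regression velocity). Data: $\eta>0$; the gas reaction heat $Q_g>0$ and the pyrolysis heat $Q_p\in\mathbb R$ with $Q_p>-Q_g$; $\Psi:[0,1]\to[0,\infty)$ of class $C^\infty$ with $\Psi(\theta)>0$ for $\theta\in[0,1)$ and $\Psi(1)=0$; a number $c_{max}<0$ and a surface-temperature map $\theta_s:[c_{max},0]\to[0,1]$ (inverse of a pyrolysis law with cut-off at the initial temperature) that is continuous and strictly decreasing with $\theta_s(0)=0$, $\theta_s(c_{max})=1$, and $C^\infty$ on $[c_{max},0)$ with $\theta_s'(c)<0$ there. Define $S(c):=\eta\,\frac{Q_p}{Q_p+Q_g}\,c$. For $c\in[c_{max},0]$, problem (P$_c$) asks for $\theta:\mathbb R\to[0,1]$, continuous, of class $C^2$ on $(-\infty,0]$ and on $[0,\infty)$ (one-sided derivatives at $0$), such that $\theta''+c\theta'=0$ for $x<0$; $\theta''+\eta c\theta'=-\Psi(\theta)$ for $x>0$; $\theta(x)\to0$ as $x\to-\infty$, $\theta(0)=\theta_s(c)$, $\theta(x)\to1$ as $x\to+\infty$, $\theta'(x)\to0$ as $x\to\pm\infty$; and the interface heat balance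 $\theta'(0^+)-\eta\,\theta'(0^-)=S(c)$. *)

theory Defs
  imports "HOL-Analysis.Analysis"
begin

text \<open>C-infinity on a set S (derivatives taken within S, so one-sided at endpoints):
  there is a sequence of functions D n with D 0 = f on S and D n having derivative
  D (Suc n) at every point of S, within S.\<close>
definition smooth_within :: "(real \<Rightarrow> real) \<Rightarrow> real set \<Rightarrow> bool" where
  "smooth_within f S \<longleftrightarrow>
     (\<exists>D :: nat \<Rightarrow> real \<Rightarrow> real.
        (\<forall>x\<in>S. D 0 x = f x) \<and>
        (\<forall>n. \<forall>x\<in>S. (D n has_real_derivative D (Suc n) x) (at x within S)))"

definition Sfun :: "real \<Rightarrow> real \<Rightarrow> real \<Rightarrow> real \<Rightarrow> real" where
  "Sfun eta Qg Qp c = eta * (Qp / (Qp + Qg)) * c"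

text \<open>theta solves problem (P_c).  The functions d1, dd1 are the first and second
  derivatives of theta on (-infinity,0] (one-sided at 0), d2, dd2 those on [0,infinity).\<close>
definition solves_Pc ::
  "real \<Rightarrow> real \<Rightarrow> real \<Rightarrow> (real \<Rightarrow> real) \<Rightarrow> (real \<Rightarrow> real) \<Rightarrow> real \<Rightarrow> (real \<Rightarrow> real) \<Rightarrow> bool"
where
  "solves_Pc eta Qg Qp Psi theta_s c theta \<longleftrightarrow>
     (\<forall>x. 0 \<le> theta x \<and> theta x \<le> 1) \<and>
     continuous_on UNIV theta \<and>
     (\<exists>d1 dd1 d2 dd2 :: real \<Rightarrow> real.
        (\<forall>x\<le>0. (theta has_real_derivative d1 x) (at x within {..0})) \<and>
        (\<forall>x\<le>0. (d1 has_real_derivative dd1 x) (at x within {..0})) \<and>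
        continuous_on {..0} dd1 \<and>
        (\<forall>x\<ge>0. (theta has_real_derivative d2 x) (at x within {0..})) \<and>
        (\<forall>x\<ge>0. (d2 has_real_derivative dd2 x) (at x within {0..})) \<and>
        continuous_on {0..} dd2 \<and>
        (\<forall>x<0. dd1 x + c * d1 x = 0) \<and>
        (\<forall>x>0. dd2 x + eta * c * d2 x = - Psi (theta x)) \<and>
        (theta \<longlongrightarrow> 0) at_bot \<and>
        theta 0 = theta_s c \<and>
        (theta \<longlongrightarrow> 1) at_top \<and>
        (d1 \<longlongrightarrow> 0) at_bot \<and>
        (d2 \<longlongrightarrow> 0) at_top \<and>
        d2 0 - eta * d1 0 = Sfun eta Qg Qp c)"

end

theory Submission
  imports Defs
begin

text \<open>On the inert side every admissible profile is \<open>\<theta>\<^sub>s(c) e\<^sup>-\<^sup>c\<^sup>x\<close>, so \<open>\<theta>'(0\<^sup>-) = -c \<theta>\<^sub>s(c)\<close> and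
  the interface balance prescribes \<open>\<theta>'(0\<^sup>+)\<close>. For \<open>c = c\<^sub>m\<^sub>a\<^sub>x\<close> this slope is positive at \<open>\<theta> = 1\<close>,
  and for \<open>c = 0\<close> it vanishes while \<open>\<theta>'' = -\<Psi>(\<theta>) \<le> 0\<close>, so neither endpoint admits a solution.
  For existence we shoot: the gas-phase system started at \<open>(\<theta>\<^sub>s(c), \<theta>'(0\<^sup>+))\<close> has a global
  solution depending continuously on \<open>c\<close> (Picard iteration in a Bielecki norm). At \<open>c = 0\<close> the
  orbit turns back (\<open>\<theta>' < 0\<close> before \<open>\<theta>\<close> reaches \<open>1\<close>), at \<open>c = c\<^sub>m\<^sub>a\<^sub>x\<close> it overshoots (\<open>\<theta> > 1\<close>
  while \<open>\<theta>' > 0\<close>); both are open conditions, so by connectedness some \<open>c\<close> does neither. Its orbit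
  increases, cannot reach the equilibrium \<open>(1, 0)\<close> in finite time because a weighted energy is
  monotone, and hence converges to it.\<close>

section \<open>Comparison principles for real functions\<close>

lemma DERIV_nonneg_imp_mono_within:
  fixes f f' :: "real \<Rightarrow> real"
  assumes der: "\<And>z. z \<in> S \<Longrightarrow> (f has_real_derivative f' z) (at z within S)"
    and sub: "{x..y} \<subseteq> S" and "x \<le> y"
    and nonneg: "\<And>z. x < z \<Longrightarrow> z < y \<Longrightarrow> 0 \<le> f' z"
  shows "f x \<le> f y"
proof (rule DERIV_nonneg_imp_increasing_open[OF \<open>x \<le> y\<close>])
  show "continuous_on {x..y} f"
    using DERIV_continuous_on[OF der] continuous_on_subset sub by blast
  fix z assume z: "x < z" "z < y"
  have "at z within S = at z"
    by (rule at_within_open_subset[of z "{x<..<y}"]) (use z sub in auto)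
  then show "\<exists>D. (f has_real_derivative D) (at z) \<and> 0 \<le> D"
    using der[of z] nonneg[OF z] z sub by (metis atLeastAtMost_iff less_imp_le subsetD)
qed

lemma DERIV_nonpos_imp_antimono_within:
  fixes f f' :: "real \<Rightarrow> real"
  assumes der: "\<And>z. z \<in> S \<Longrightarrow> (f has_real_derivative f' z) (at z within S)"
    and sub: "{x..y} \<subseteq> S" and "x \<le> y"
    and nonpos: "\<And>z. x < z \<Longrightarrow> z < y \<Longrightarrow> f' z \<le> 0"
  shows "f y \<le> f x"
  using DERIV_nonneg_imp_mono_within[of S "\<lambda>z. - f z" "\<lambda>z. - f' z" x y] assms
  by (auto intro: DERIV_minus)

text \<open>If \<open>f' \<ge> \<delta> > 0\<close> wherever \<open>f \<ge> e\<close>, then \<open>f\<close> can never return below the level \<open>e\<close>: at the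
  last time it is above \<open>e\<close> it would still be increasing.\<close>

lemma DERIV_barrier_linear_growth:
  fixes f f' :: "real \<Rightarrow> real"
  assumes der: "\<And>z. x0 \<le> z \<Longrightarrow> (f has_real_derivative f' z) (at z within {x0..})"
    and start: "e \<le> f x0"
    and push: "\<And>z. x0 \<le> z \<Longrightarrow> e \<le> f z \<Longrightarrow> \<delta> \<le> f' z" and "0 < \<delta>"
    and "x0 \<le> x"
  shows "e + \<delta> * (x - x0) \<le> f x"
proof -
  have stays: "e \<le> f x1" if "x0 \<le> x1" for x1
  proof (rule ccontr)
    assume below: "\<not> e \<le> f x1"
    define T where "T = {x0..x1} \<inter> f -` {e..}"
    have "continuous_on {x0..} f"
      by (rule DERIV_continuous_on[of "{x0..}" f f']) (use der in auto)
    then have "closed T"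
      unfolding T_def by (intro continuous_closed_preimage) (auto elim: continuous_on_subset)
    moreover have "T \<noteq> {}" "bdd_above T"
      using start \<open>x0 \<le> x1\<close> unfolding T_def by (auto intro: bdd_aboveI[of _ x1])
    ultimately have "Sup T \<in> T" by (rule closed_contains_Sup[rotated -1])
    then have s: "x0 \<le> Sup T" "Sup T < x1" "e \<le> f (Sup T)"
      using below unfolding T_def by (auto simp: order.order_iff_strict)
    then have "0 < f' (Sup T)" using push[of "Sup T"] \<open>0 < \<delta>\<close> by simp
    then obtain d where d: "0 < d" "\<And>h. 0 < h \<Longrightarrow> Sup T + h \<in> {x0..} \<Longrightarrow> h < d \<Longrightarrow> f (Sup T) < f (Sup T + h)"
      using has_real_derivative_pos_inc_right[OF der[OF s(1)]] by blast
    define h where "h = min (d / 2) ((x1 - Sup T) / 2)"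
    have h: "0 < h" "h < d" "Sup T + h \<le> x1" unfolding h_def using d(1) s(2) by (auto simp: min_def field_simps)
    then have "Sup T + h \<in> T" using d(2)[of h] s unfolding T_def by auto
    then show False using cSup_upper[OF _ \<open>bdd_above T\<close>] h by fastforce
  qed
  have "f x0 - \<delta> * x0 \<le> f x - \<delta> * x"
    by (rule DERIV_nonneg_imp_mono_within[where S="{x0..}" and f'="\<lambda>z. f' z - \<delta>"])
       (use der \<open>x0 \<le> x\<close> push stays in \<open>auto intro!: derivative_eq_intros\<close>)
  then show ?thesis using start by (simp add: algebra_simps)
qed

lemma DERIV_pos_exit_right:
  fixes f g :: "real \<Rightarrow> real"
  assumes der: "(f has_real_derivative D) (at s within {s..})" and "0 < D"
    and "isCont g s" and "g s < r"
  obtains x where "s < x" "f s < f x" "\<And>y. y \<in> {s..x} \<Longrightarrow> g y < r"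
proof -
  obtain d where d: "0 < d" "\<And>h. 0 < h \<Longrightarrow> s + h \<in> {s..} \<Longrightarrow> h < d \<Longrightarrow> f s < f (s + h)"
    using has_real_derivative_pos_inc_right[OF der \<open>0 < D\<close>] by blast
  have "eventually (\<lambda>y. g y < r) (at s)"
    using \<open>isCont g s\<close> \<open>g s < r\<close> by (auto simp: isCont_def intro: order_tendstoD)
  then obtain d' where d': "0 < d'" "\<And>y. dist y s < d' \<Longrightarrow> g y < r"
    using \<open>g s < r\<close> unfolding eventually_at by (metis UNIV_I)
  show ?thesis
  proof
    show "s < s + min d d' / 2" "f s < f (s + min d d' / 2)"
      using d d' by (auto intro!: d(2))
    show "g y < r" if "y \<in> {s..s + min d d' / 2}" for y
      using that d' by (intro d'(2)) (auto simp: dist_real_def)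
  qed
qed

lemma isCont_left_upper_bound:
  fixes f :: "real \<Rightarrow> real"
  assumes "isCont f s" "a < s" "\<And>y. a < y \<Longrightarrow> y < s \<Longrightarrow> f y \<le> r"
  shows "f s \<le> r"
proof (rule tendsto_upperbound)
  show "(f \<longlongrightarrow> f s) (at_left s)"
    using assms(1) by (simp add: isCont_def filterlim_at_split)
  show "eventually (\<lambda>y. f y \<le> r) (at_left s)"
    using eventually_at_left_real[OF assms(2)] by eventually_elim (use assms(3) in auto)
qed simp

lemma DERIV_le_affine_positive_imp_ge:
  fixes p p' :: "real \<Rightarrow> real"
  assumes der: "\<And>z. x0 \<le> z \<Longrightarrow> (p has_real_derivative p' z) (at z within {x0..})"
    and pos: "\<And>z. x0 \<le> z \<Longrightarrow> 0 < p z"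
    and le: "\<And>z. x0 \<le> z \<Longrightarrow> p' z \<le> a * p z - m" and "0 \<le> a"
  shows "m \<le> a * p x0"
proof (rule ccontr)
  assume "\<not> m \<le> a * p x0"
  define \<delta> where "\<delta> = m - a * p x0"
  have "0 < \<delta>" using \<open>\<not> m \<le> a * p x0\<close> by (simp add: \<delta>_def)
  define X where "X = x0 + p x0 / \<delta>"
  have "x0 \<le> X" using pos[of x0] \<open>0 < \<delta>\<close> by (simp add: X_def)
  have "- p x0 + \<delta> * (X - x0) \<le> - p X"
  proof (rule DERIV_barrier_linear_growth[where f'="\<lambda>z. - p' z"])
    show "((\<lambda>z. - p z) has_real_derivative - p' z) (at z within {x0..})" if "x0 \<le> z" for z
      using der[OF that] by (rule DERIV_minus)
    show "\<delta> \<le> - p' z" if "x0 \<le> z" "- p x0 \<le> - p z" for z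
      using le[OF that(1)] mult_left_mono[of "p z" "p x0" a] that(2) \<open>0 \<le> a\<close>
      by (simp add: \<delta>_def)
  qed (use \<open>0 < \<delta>\<close> \<open>x0 \<le> X\<close> in auto)
  then show False
    using pos[OF \<open>x0 \<le> X\<close>] \<open>0 < \<delta>\<close> by (simp add: X_def)
qed

lemma energy_rate_nonneg:
  fixes L a P q p :: real
  assumes "0 \<le> L" "0 \<le> a" "\<bar>P\<bar> \<le> L * \<bar>q\<bar>"
  shows "0 \<le> (1 + L) * (q * q + p * p) - 2 * q * p + 2 * a * (p * p) - 2 * p * P"
proof -
  have "2 * q * p \<le> q * q + p * p"
    using sum_squares_ge_zero[of "q - p" 0] by (simp add: algebra_simps)
  moreover have "2 * p * P \<le> L * (q * q + p * p)"
  proof -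
    have "2 * p * P \<le> 2 * (\<bar>p\<bar> * (L * \<bar>q\<bar>))"
      using assms(3) abs_ge_self[of "p * P"] mult_left_mono[OF assms(3) abs_ge_zero[of p]]
      by (simp add: abs_mult)
    also have "\<dots> \<le> L * (q * q + p * p)"
      using mult_left_mono[OF sum_squares_ge_zero[of "\<bar>q\<bar> - \<bar>p\<bar>" 0] assms(1)]
      by (simp add: algebra_simps abs_mult_self_eq)
    finally show ?thesis .
  qed
  moreover have "0 \<le> 2 * a * (p * p)" using assms(2) by simp
  ultimately show ?thesis by (simp add: algebra_simps)
qed

text \<open>A Lyapunov bound: \<open>e\<^sup>(\<^sup>1\<^sup>+\<^sup>L\<^sup>)\<^sup>x ((1 - t)\<^sup>2 + p\<^sup>2)\<close> is nondecreasing along \<open>t' = p\<close>,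
  \<open>p' = a p - P\<close>, so the equilibrium \<open>(1, 0)\<close> cannot be reached in finite time.\<close>

lemma energy_stays_pos:
  fixes t p P :: "real \<Rightarrow> real"
  assumes t': "\<And>z. 0 \<le> z \<Longrightarrow> (t has_real_derivative p z) (at z within {0..})"
    and p': "\<And>z. 0 \<le> z \<Longrightarrow> (p has_real_derivative a * p z - P z) (at z within {0..})"
    and "0 \<le> a" "0 \<le> L" and P: "\<And>z. \<bar>P z\<bar> \<le> L * \<bar>1 - t z\<bar>"
    and start: "0 < (1 - t 0) * (1 - t 0) + p 0 * p 0" and "0 \<le> x"
  shows "0 < (1 - t x) * (1 - t x) + p x * p x"
proof -
  define E where "E = (\<lambda>z. (1 - t z) * (1 - t z) + p z * p z)"
  define g' where "g' z = exp ((1 + L) * z) *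
    ((1 + L) * E z - 2 * (1 - t z) * p z + 2 * a * (p z * p z) - 2 * p z * P z)" for z
  have der: "((\<lambda>z. exp ((1 + L) * z) * E z) has_real_derivative g' z) (at z within {0..})" if "z \<in> {0..}" for z
  proof -
    have "0 \<le> z" using that by simp
    have t1: "((\<lambda>z. 1 - t z) has_real_derivative 0 - p z) (at z within {0..})"
      by (rule DERIV_diff[OF DERIV_const t'[OF \<open>0 \<le> z\<close>]])
    have exp': "((\<lambda>z. exp ((1 + L) * z)) has_real_derivative exp ((1 + L) * z) * (1 + L)) (at z within {0..})"
      by (auto intro!: derivative_eq_intros)
    have "((\<lambda>z. exp ((1 + L) * z) * E z) has_real_derivative
        exp ((1 + L) * z) * (1 + L) * E z
        + ((0 - p z) * (1 - t z) + (0 - p z) * (1 - t z) + ((a * p z - P z) * p z + (a * p z - P z) * p z))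
          * exp ((1 + L) * z)) (at z within {0..})"
      unfolding E_def by (rule DERIV_mult[OF exp' DERIV_add[OF DERIV_mult[OF t1 t1] DERIV_mult[OF p'[OF \<open>0 \<le> z\<close>] p'[OF \<open>0 \<le> z\<close>]]]])
    moreover have "exp ((1 + L) * z) * (1 + L) * E z
        + ((0 - p z) * (1 - t z) + (0 - p z) * (1 - t z) + ((a * p z - P z) * p z + (a * p z - P z) * p z))
          * exp ((1 + L) * z) = g' z"
      by (simp add: g'_def algebra_simps)
    ultimately show ?thesis by simp
  qed
  have nonneg: "0 \<le> g' z" for z
    unfolding g'_def E_def
    using energy_rate_nonneg[where p="p z", OF \<open>0 \<le> L\<close> \<open>0 \<le> a\<close> P[of z]]
    by (intro mult_nonneg_nonneg) simp_all
  have "exp ((1 + L) * 0) * E 0 \<le> exp ((1 + L) * x) * E x"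
    by (rule DERIV_nonneg_imp_mono_within[OF der]) (use nonneg \<open>0 \<le> x\<close> in auto)
  then have "0 < exp ((1 + L) * x) * E x"
    using start by (simp add: E_def)
  then show ?thesis
    by (simp add: E_def zero_less_mult_iff)
qed

lemma has_real_derivative_fst:
  assumes "(u has_vector_derivative v) F"
  shows "((\<lambda>x. fst (u x)) has_real_derivative fst v) F"
proof -
  have "((\<lambda>x. fst (u x)) has_derivative (\<lambda>h. fst (h *\<^sub>R v))) F"
    using has_derivative_fst[OF assms[unfolded has_vector_derivative_def]] .
  moreover have "(\<lambda>h. fst (h *\<^sub>R v)) = (*) (fst v)" by (auto simp: mult.commute)
  ultimately show ?thesis by (simp add: has_field_derivative_def)
qed

lemma has_real_derivative_snd:
  assumes "(u has_vector_derivative v) F"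
  shows "((\<lambda>x. snd (u x)) has_real_derivative snd v) F"
proof -
  have "((\<lambda>x. snd (u x)) has_derivative (\<lambda>h. snd (h *\<^sub>R v))) F"
    using has_derivative_snd[OF assms[unfolded has_vector_derivative_def]] .
  moreover have "(\<lambda>h. snd (h *\<^sub>R v)) = (*) (snd v)" by (auto simp: mult.commute)
  ultimately show ?thesis by (simp add: has_field_derivative_def)
qed

lemma smooth_within_imp_lipschitz:
  fixes f :: "real \<Rightarrow> real"
  assumes "smooth_within f {a..b}"
  obtains L where "L-lipschitz_on {a..b} f"
proof -
  obtain D :: "nat \<Rightarrow> real \<Rightarrow> real" where D0: "\<forall>x\<in>{a..b}. D 0 x = f x"
    and D: "\<forall>n. \<forall>x\<in>{a..b}. (D n has_real_derivative D (Suc n) x) (at x within {a..b})"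
    using assms unfolding smooth_within_def by blast
  have f': "(f has_real_derivative D 1 x) (at x within {a..b})" if "x \<in> {a..b}" for x
  proof -
    have "(D 0 has_real_derivative D 1 x) (at x within {a..b})"
      using D that by (simp add: One_nat_def)
    then show ?thesis
      by (rule has_field_derivative_transform_within[where d=1]) (use that D0 in auto)
  qed
  have "continuous_on {a..b} (D 1)"
    by (rule DERIV_continuous_on[where D="D 2"]) (use D in \<open>simp add: numeral_2_eq_2\<close>)
  then have "bounded (D 1 ` {a..b})"
    by (intro compact_imp_bounded compact_continuous_image compact_Icc)
  then obtain B where B: "\<forall>y\<in>D 1 ` {a..b}. norm y \<le> B"
    unfolding bounded_iff by blast
  have "\<bar>B\<bar>-lipschitz_on {a..b} f"
  proof (rule lipschitz_onI)
    fix x y assume "x \<in> {a..b}" "y \<in> {a..b}"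
    then have "norm (f x - f y) \<le> \<bar>B\<bar> * norm (x - y)"
      using B by (intro field_differentiable_bound[OF convex_real_interval(5) f']) force+
    then show "dist (f x) (f y) \<le> \<bar>B\<bar> * dist x y"
      by (simp add: dist_norm)
  qed simp
  then show ?thesis ..
qed

section \<open>Global solutions of Lipschitz systems\<close>

lemma continuous_on_integral_from_0:
  fixes g :: "real \<Rightarrow> 'a::banach"
  assumes "continuous_on UNIV g"
  shows "continuous_on UNIV (\<lambda>x. integral {0..x} g)"
proof (rule continuous_at_imp_continuous_on, intro ballI)
  fix x0 :: real
  define b where "b = \<bar>x0\<bar> + 1"
  have "integral {0..x} g = integral {0..max 0 x} g" for x
    by (cases "0 \<le> x") auto
  moreover have "continuous_on {0..b} (\<lambda>y. integral {0..y} g)"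
    by (intro indefinite_integral_continuous_1 integrable_continuous_real)
       (use assms in \<open>auto elim: continuous_on_subset\<close>)
  then have "continuous_on {-b..b} (\<lambda>x. integral {0..max 0 x} g)"
    by (rule continuous_on_compose2) (auto simp: b_def intro!: continuous_intros)
  ultimately have "continuous_on {-b<..<b} (\<lambda>x. integral {0..x} g)"
    by (auto elim: continuous_on_subset)
  then show "isCont (\<lambda>x. integral {0..x} g) x0"
    by (rule continuous_on_interior) (auto simp: b_def)
qed

lemma weighted_integral_bound:
  fixes f :: "real \<Rightarrow> 'a::banach"
  assumes "0 < L" "0 \<le> C" and cont: "continuous_on {0..x} f"
    and bound: "\<And>t. t \<in> {0..x} \<Longrightarrow> norm (f t) \<le> C * exp (L * t)"
  shows "exp (- L * max 0 x) * norm (integral {0..x} f) \<le> C / L"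
proof (cases "0 \<le> x")
  case True
  have "((\<lambda>t. C * exp (L * t)) has_integral C * exp (L * x) / L - C * exp (L * 0) / L) {0..x}"
    using True \<open>0 < L\<close>
    by (intro fundamental_theorem_of_calculus)
       (auto intro!: derivative_eq_intros simp: has_real_derivative_iff_has_vector_derivative[symmetric])
  then have int: "((\<lambda>t. C * exp (L * t)) has_integral C * exp (L * x) / L - C / L) {0..x}"
    by simp
  have "norm (integral {0..x} f) \<le> integral {0..x} (\<lambda>t. C * exp (L * t))"
    by (rule integral_norm_bound_integral[OF integrable_continuous_real[OF cont]
                                            has_integral_integrable[OF int] bound])
  also have "\<dots> = C * exp (L * x) / L - C / L"
    by (rule integral_unique[OF int])
  finally have "exp (- L * x) * norm (integral {0..x} f) \<le> exp (- L * x) * (C * exp (L * x) / L - C / L)"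
    by (rule mult_left_mono) simp
  also have "\<dots> = C * (1 - exp (- L * x)) / L"
    using \<open>0 < L\<close> by (simp add: exp_minus field_simps)
  also have "\<dots> \<le> C / L"
    using assms by (intro divide_right_mono mult_left_le) auto
  finally show ?thesis using True by simp
qed (use assms in simp)

text \<open>Picard's map \<open>u \<mapsto> u\<^sub>0 + \<integral>\<^sub>0\<^sup>x G \<circ> u\<close> written for \<open>w(x) = e\<^sup>-\<^sup>L\<^sup>x u(x)\<close> and frozen for \<open>x \<le> 0\<close>.
  In the sup norm of \<open>w\<close> (Bielecki's norm of \<open>u\<close>) it contracts by \<open>K / L\<close> when \<open>G\<close> is
  \<open>K\<close>-Lipschitz, which yields a global solution on \<open>[0, \<infinity>)\<close> in one step.\<close>

definition bielecki_step :: "('a::banach \<Rightarrow> 'a) \<Rightarrow> 'a \<Rightarrow> real \<Rightarrow> (real \<Rightarrow> 'a) \<Rightarrow> real \<Rightarrow> 'a" where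
  "bielecki_step G u0 L w x =
     exp (- L * max 0 x) *\<^sub>R (u0 + integral {0..x} (\<lambda>t. G (exp (L * t) *\<^sub>R w t)))"

lemma continuous_on_bielecki_integrand:
  fixes G :: "'a::banach \<Rightarrow> 'a"
  assumes "continuous_on UNIV G" "continuous_on UNIV w"
  shows "continuous_on UNIV (\<lambda>t. G (exp (L * t) *\<^sub>R w t))"
  by (rule continuous_on_compose2[OF assms(1)]) (auto intro!: continuous_intros assms(2))

lemma continuous_on_bielecki_step:
  fixes G :: "'a::banach \<Rightarrow> 'a"
  assumes "continuous_on UNIV G" "continuous_on UNIV w"
  shows "continuous_on UNIV (bielecki_step G u0 L w)"
  unfolding bielecki_step_def[abs_def]
  by (intro continuous_intros continuous_on_integral_from_0 continuous_on_bielecki_integrand assms)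

lemma bielecki_step_dist:
  fixes G1 G2 :: "'a::banach \<Rightarrow> 'a"
  assumes G: "continuous_on UNIV G1" "continuous_on UNIV G2"
    and w: "continuous_on UNIV w1" "continuous_on UNIV w2"
    and "0 < L" "0 \<le> C"
    and bound: "\<And>t. 0 \<le> t \<Longrightarrow>
      norm (G1 (exp (L * t) *\<^sub>R w1 t) - G2 (exp (L * t) *\<^sub>R w2 t)) \<le> C * exp (L * t)"
  shows "norm (bielecki_step G1 u1 L w1 x - bielecki_step G2 u2 L w2 x) \<le> norm (u1 - u2) + C / L"
proof -
  let ?g1 = "\<lambda>t. G1 (exp (L * t) *\<^sub>R w1 t)" and ?g2 = "\<lambda>t. G2 (exp (L * t) *\<^sub>R w2 t)"
  let ?e = "exp (- L * max 0 x)"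
  have cont: "continuous_on {0..x} ?g1" "continuous_on {0..x} ?g2"
    using continuous_on_bielecki_integrand[OF G(1) w(1), where L=L]
      continuous_on_bielecki_integrand[OF G(2) w(2), where L=L]
    by (auto elim: continuous_on_subset)
  have I: "integral {0..x} (\<lambda>t. ?g1 t - ?g2 t) = integral {0..x} ?g1 - integral {0..x} ?g2"
    by (rule integral_diff[OF integrable_continuous_real[OF cont(1)] integrable_continuous_real[OF cont(2)]])
  have "bielecki_step G1 u1 L w1 x - bielecki_step G2 u2 L w2 x
      = ?e *\<^sub>R ((u1 - u2) + integral {0..x} (\<lambda>t. ?g1 t - ?g2 t))"
    unfolding bielecki_step_def I by (simp add: algebra_simps)
  then have "norm (bielecki_step G1 u1 L w1 x - bielecki_step G2 u2 L w2 x)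
      \<le> ?e * norm (u1 - u2) + ?e * norm (integral {0..x} (\<lambda>t. ?g1 t - ?g2 t))"
    by (simp add: norm_triangle_ineq distrib_left[symmetric] mult_left_mono)
  also have "\<dots> \<le> norm (u1 - u2) + C / L"
  proof (rule add_mono)
    show "?e * norm (u1 - u2) \<le> norm (u1 - u2)"
      using \<open>0 < L\<close> by (simp add: mult_left_le_one_le)
    show "?e * norm (integral {0..x} (\<lambda>t. ?g1 t - ?g2 t)) \<le> C / L"
      using cont bound by (intro weighted_integral_bound \<open>0 < L\<close> \<open>0 \<le> C\<close> continuous_intros) auto
  qed
  finally show ?thesis .
qed

definition picard_map :: "('a::banach \<Rightarrow> 'a) \<Rightarrow> 'a \<Rightarrow> real \<Rightarrow> (real \<Rightarrow>\<^sub>C 'a) \<Rightarrow> (real \<Rightarrow>\<^sub>C 'a)" where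
  "picard_map G u0 L w = Bcontfun (bielecki_step G u0 L (apply_bcontfun w))"

definition picard_fixpoint :: "('a::banach \<Rightarrow> 'a) \<Rightarrow> 'a \<Rightarrow> real \<Rightarrow> (real \<Rightarrow>\<^sub>C 'a)" where
  "picard_fixpoint G u0 L = (THE w. picard_map G u0 L w = w)"

definition picard_solution :: "('a::banach \<Rightarrow> 'a) \<Rightarrow> 'a \<Rightarrow> real \<Rightarrow> real \<Rightarrow> 'a" where
  "picard_solution G u0 L x = exp (L * x) *\<^sub>R picard_fixpoint G u0 L x"

lemma picard_map_apply:
  fixes G :: "'a::banach \<Rightarrow> 'a"
  assumes lip: "K-lipschitz_on UNIV G" and "0 < L"
  shows "apply_bcontfun (picard_map G u0 L w) = bielecki_step G u0 L w"
proof -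
  have cG: "continuous_on UNIV G" by (rule lipschitz_on_continuous_on[OF lip])
  have "bielecki_step G u0 L w \<in> bcontfun"
  proof (rule bcontfun_normI)
    show "continuous_on UNIV (bielecki_step G u0 L w)"
      by (rule continuous_on_bielecki_step[OF cG]) simp
    fix x
    have "norm (bielecki_step G u0 L w x - bielecki_step (\<lambda>_. 0) 0 L w x)
        \<le> norm (u0 - 0) + (norm (G 0) + K * norm w) / L"
    proof (rule bielecki_step_dist[OF cG _ _ _ \<open>0 < L\<close>])
      show "0 \<le> norm (G 0) + K * norm w"
        using lipschitz_on_nonneg[OF lip] by simp
      fix t :: real assume "0 \<le> t"
      then have "1 \<le> exp (L * t)" using \<open>0 < L\<close> by simp
      have "norm (G (exp (L * t) *\<^sub>R w t)) \<le> norm (G 0) + norm (G (exp (L * t) *\<^sub>R w t) - G 0)"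
        by (rule norm_triangle_sub)
      also have "\<dots> \<le> norm (G 0) + K * norm (exp (L * t) *\<^sub>R w t - 0)"
        using lipschitz_on_normD[OF lip, of "exp (L * t) *\<^sub>R w t" 0] by simp
      also have "\<dots> \<le> norm (G 0) * exp (L * t) + K * (exp (L * t) * norm w)"
        using mult_left_mono[OF \<open>1 \<le> exp (L * t)\<close>, of "norm (G 0)"]
          lipschitz_on_nonneg[OF lip] norm_bounded[of w t]
        by (intro add_mono mult_left_mono) auto
      finally show "norm (G (exp (L * t) *\<^sub>R w t) - 0) \<le> (norm (G 0) + K * norm w) * exp (L * t)"
        by (simp add: algebra_simps)
    qed simp_all
    then show "norm (bielecki_step G u0 L w x) \<le> norm u0 + (norm (G 0) + K * norm w) / L"
      by (simp add: bielecki_step_def)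
  qed
  then show ?thesis unfolding picard_map_def by (rule Bcontfun_inverse)
qed

lemma picard_map_contraction:
  fixes G :: "'a::banach \<Rightarrow> 'a"
  assumes lip: "K-lipschitz_on UNIV G" and "0 < L" "2 * K \<le> L"
  shows "dist (picard_map G u0 L w1) (picard_map G u0 L w2) \<le> 1/2 * dist w1 w2"
proof (rule dist_bound)
  have cG: "continuous_on UNIV G" by (rule lipschitz_on_continuous_on[OF lip])
  fix x
  have "dist (picard_map G u0 L w1 x) (picard_map G u0 L w2 x)
      = norm (bielecki_step G u0 L w1 x - bielecki_step G u0 L w2 x)"
    by (simp add: picard_map_apply[OF lip \<open>0 < L\<close>] dist_norm)
  also have "\<dots> \<le> norm (u0 - u0) + K * dist w1 w2 / L"
  proof (rule bielecki_step_dist[OF cG cG _ _ \<open>0 < L\<close>])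
    show "0 \<le> K * dist w1 w2" using lipschitz_on_nonneg[OF lip] by simp
    fix t
    have "norm (G (exp (L * t) *\<^sub>R w1 t) - G (exp (L * t) *\<^sub>R w2 t))
        \<le> K * norm (exp (L * t) *\<^sub>R w1 t - exp (L * t) *\<^sub>R w2 t)"
      by (rule lipschitz_on_normD[OF lip]) auto
    also have "\<dots> = K * (exp (L * t) * dist (w1 t) (w2 t))"
      by (simp add: dist_norm flip: scaleR_diff_right)
    also have "\<dots> \<le> K * (exp (L * t) * dist w1 w2)"
      using dist_bounded[of w1 t w2] lipschitz_on_nonneg[OF lip] by (intro mult_left_mono) auto
    finally show "norm (G (exp (L * t) *\<^sub>R w1 t) - G (exp (L * t) *\<^sub>R w2 t)) \<le> K * dist w1 w2 * exp (L * t)"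
      by (simp add: ac_simps)
  qed simp_all
  also have "\<dots> = K / L * dist w1 w2"
    by simp
  also have "\<dots> \<le> 1/2 * dist w1 w2"
    using assms by (intro mult_right_mono) (auto simp: divide_le_eq)
  finally show "dist (picard_map G u0 L w1 x) (picard_map G u0 L w2 x) \<le> 1/2 * dist w1 w2" .
qed

lemma picard_fixpoint_eq:
  fixes G :: "'a::banach \<Rightarrow> 'a"
  assumes "K-lipschitz_on UNIV G" "0 < L" "2 * K \<le> L"
  shows "picard_map G u0 L (picard_fixpoint G u0 L) = picard_fixpoint G u0 L"
proof -
  have "\<exists>!w. picard_map G u0 L w = w"
    by (rule banach_fix_type[of "1/2"]) (use picard_map_contraction[OF assms] in auto)
  then show ?thesis unfolding picard_fixpoint_def by (rule theI')
qed

lemma continuous_on_picard_solution: "continuous_on UNIV (picard_solution G u0 L)"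
  unfolding picard_solution_def[abs_def] by (intro continuous_intros) auto

lemma picard_solution_integral_eq:
  fixes G :: "'a::banach \<Rightarrow> 'a"
  assumes "K-lipschitz_on UNIV G" "0 < L" "2 * K \<le> L" and "0 \<le> x"
  shows "picard_solution G u0 L x = u0 + integral {0..x} (\<lambda>t. G (picard_solution G u0 L t))"
proof -
  have "picard_fixpoint G u0 L x = bielecki_step G u0 L (picard_fixpoint G u0 L) x"
    using picard_fixpoint_eq[OF assms(1-3)] picard_map_apply[OF assms(1,2)] by metis
  then show ?thesis
    using \<open>0 \<le> x\<close> by (simp add: picard_solution_def bielecki_step_def flip: exp_add)
qed

lemma picard_solution_0:
  fixes G :: "'a::banach \<Rightarrow> 'a"
  assumes "K-lipschitz_on UNIV G" "0 < L" "2 * K \<le> L"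
  shows "picard_solution G u0 L 0 = u0"
  using picard_solution_integral_eq[OF assms, of 0] by simp

lemma picard_solution_has_vector_derivative:
  fixes G :: "'a::banach \<Rightarrow> 'a"
  assumes lip: "K-lipschitz_on UNIV G" and "0 < L" "2 * K \<le> L" and "0 \<le> x"
  shows "(picard_solution G u0 L has_vector_derivative G (picard_solution G u0 L x)) (at x within {0..})"
proof -
  let ?u = "picard_solution G u0 L"
  have "continuous_on UNIV (\<lambda>t. G (?u t))"
    by (rule continuous_on_compose2[OF lipschitz_on_continuous_on[OF lip] continuous_on_picard_solution]) auto
  then have "((\<lambda>y. integral {0..y} (\<lambda>t. G (?u t))) has_vector_derivative G (?u x)) (at x within {0..x+1})"
    using \<open>0 \<le> x\<close> by (intro integral_has_vector_derivative) (auto elim: continuous_on_subset)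
  then have "((\<lambda>y. u0 + integral {0..y} (\<lambda>t. G (?u t))) has_vector_derivative G (?u x)) (at x within {0..x+1})"
    using has_vector_derivative_add[OF has_vector_derivative_const[of u0]] by fastforce
  moreover have "at x within {0..x+1} = at x within {0..}"
    by (rule at_within_nhd[where S="{..<x+1}"]) auto
  ultimately have "((\<lambda>y. u0 + integral {0..y} (\<lambda>t. G (?u t))) has_vector_derivative G (?u x)) (at x within {0..})"
    by simp
  then show ?thesis
    by (rule has_vector_derivative_transform_within[where d=1])
       (use picard_solution_integral_eq[OF assms(1-3)] \<open>0 \<le> x\<close> in auto)
qed

lemma picard_fixpoint_dist:
  fixes G1 G2 :: "'a::banach \<Rightarrow> 'a"
  assumes lip: "K-lipschitz_on UNIV G1" "K-lipschitz_on UNIV G2" and "0 < L" "2 * K \<le> L"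
    and close: "\<And>v. norm (G1 v - G2 v) \<le> \<beta> * norm v" and "0 \<le> \<beta>"
  shows "dist (picard_fixpoint G1 u1 L) (picard_fixpoint G2 u2 L)
      \<le> 2 * (norm (u1 - u2) + \<beta> * norm (picard_fixpoint G1 u1 L) / L)"
proof -
  let ?w1 = "picard_fixpoint G1 u1 L" and ?w2 = "picard_fixpoint G2 u2 L"
  have "dist ?w1 ?w2 = dist (picard_map G1 u1 L ?w1) (picard_map G2 u2 L ?w2)"
    using picard_fixpoint_eq[OF lip(1) \<open>0 < L\<close> \<open>2 * K \<le> L\<close>]
      picard_fixpoint_eq[OF lip(2) \<open>0 < L\<close> \<open>2 * K \<le> L\<close>] by simp
  also have "\<dots> \<le> dist (picard_map G1 u1 L ?w1) (picard_map G2 u2 L ?w1)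
                 + dist (picard_map G2 u2 L ?w1) (picard_map G2 u2 L ?w2)"
    by (rule dist_triangle)
  also have "dist (picard_map G2 u2 L ?w1) (picard_map G2 u2 L ?w2) \<le> 1/2 * dist ?w1 ?w2"
    by (rule picard_map_contraction[OF lip(2) \<open>0 < L\<close> \<open>2 * K \<le> L\<close>])
  also have "dist (picard_map G1 u1 L ?w1) (picard_map G2 u2 L ?w1) \<le> norm (u1 - u2) + \<beta> * norm ?w1 / L"
  proof (rule dist_bound)
    fix x
    have "norm (bielecki_step G1 u1 L ?w1 x - bielecki_step G2 u2 L ?w1 x) \<le> norm (u1 - u2) + \<beta> * norm ?w1 / L"
    proof (rule bielecki_step_dist[OF lipschitz_on_continuous_on[OF lip(1)] lipschitz_on_continuous_on[OF lip(2)]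
                                      _ _ \<open>0 < L\<close>])
      show "0 \<le> \<beta> * norm ?w1" using \<open>0 \<le> \<beta>\<close> by simp
      fix t
      have "norm (G1 (exp (L * t) *\<^sub>R ?w1 t) - G2 (exp (L * t) *\<^sub>R ?w1 t)) \<le> \<beta> * (exp (L * t) * norm (?w1 t))"
        using close[of "exp (L * t) *\<^sub>R ?w1 t"] by simp
      also have "\<dots> \<le> \<beta> * (exp (L * t) * norm ?w1)"
        using norm_bounded[of ?w1 t] \<open>0 \<le> \<beta>\<close> by (intro mult_left_mono) auto
      finally show "norm (G1 (exp (L * t) *\<^sub>R ?w1 t) - G2 (exp (L * t) *\<^sub>R ?w1 t)) \<le> \<beta> * norm ?w1 * exp (L * t)"
        by (simp add: ac_simps)
    qed simp_all
    then show "dist (picard_map G1 u1 L ?w1 x) (picard_map G2 u2 L ?w1 x) \<le> norm (u1 - u2) + \<beta> * norm ?w1 / L"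
      by (simp add: picard_map_apply[OF lip(1) \<open>0 < L\<close>] picard_map_apply[OF lip(2) \<open>0 < L\<close>] dist_norm)
  qed
  finally show ?thesis by simp
qed

section \<open>The interface problem\<close>

lemma clamp_in_interval_real: "clamp 0 1 (x::real) \<in> {0..1}"
  using clamp_in_interval[of "0::real" 1 x] by simp

text \<open>The gas-phase equation \<open>\<theta>'' + \<eta>c\<theta>' = -\<Psi>(\<theta>)\<close> as a system for \<open>(\<theta>, \<theta>')\<close>, with \<open>a = -\<eta>c\<close>.
  Clamping \<open>\<theta>\<close> to \<open>[0, 1]\<close> makes the field globally Lipschitz without changing it on the
  physical range.\<close>

definition shooting_field :: "(real \<Rightarrow> real) \<Rightarrow> real \<Rightarrow> real \<times> real \<Rightarrow> real \<times> real" where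
  "shooting_field Psi a v = (snd v, a * snd v - Psi (clamp 0 1 (fst v)))"

lemma shooting_field_lipschitz:
  assumes lip: "Lp-lipschitz_on {0..1} Psi" and "0 \<le> a" "a \<le> A"
  shows "(1 + A + Lp)-lipschitz_on UNIV (shooting_field Psi a)"
proof (rule lipschitz_onI)
  fix v w :: "real \<times> real"
  have "dist (Psi (clamp 0 1 (fst v))) (Psi (clamp 0 1 (fst w))) \<le> Lp * dist (clamp 0 1 (fst v)) (clamp 0 1 (fst w))"
    by (rule lipschitz_onD[OF lip]) (simp_all only: clamp_in_interval_real)
  also have "\<dots> \<le> Lp * dist v w"
    using dist_clamps_le_dist_args[of 0 1 "fst v" "fst w"] dist_fst_le[of v w] lipschitz_on_nonneg[OF lip]
    by (intro mult_left_mono) auto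
  finally have Psi: "\<bar>Psi (clamp 0 1 (fst v)) - Psi (clamp 0 1 (fst w))\<bar> \<le> Lp * dist v w"
    by (simp add: dist_real_def)
  have snd: "\<bar>snd v - snd w\<bar> \<le> dist v w"
    using dist_snd_le[of v w] by (simp add: dist_real_def)
  have "shooting_field Psi a v - shooting_field Psi a w
      = (snd v - snd w, a * (snd v - snd w) - (Psi (clamp 0 1 (fst v)) - Psi (clamp 0 1 (fst w))))"
    by (simp add: shooting_field_def algebra_simps)
  then have "dist (shooting_field Psi a v) (shooting_field Psi a w)
      \<le> \<bar>snd v - snd w\<bar> + \<bar>a * (snd v - snd w) - (Psi (clamp 0 1 (fst v)) - Psi (clamp 0 1 (fst w)))\<bar>"
    using norm_Pair_le by (metis dist_norm real_norm_def)
  also have "\<dots> \<le> \<bar>snd v - snd w\<bar> + (a * \<bar>snd v - snd w\<bar> + \<bar>Psi (clamp 0 1 (fst v)) - Psi (clamp 0 1 (fst w))\<bar>)"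
    using abs_triangle_ineq4[of "a * (snd v - snd w)"] \<open>0 \<le> a\<close> by (simp add: abs_mult)
  also have "\<dots> \<le> dist v w + (A * dist v w + Lp * dist v w)"
    using snd Psi \<open>0 \<le> a\<close> \<open>a \<le> A\<close> by (intro add_mono mult_mono) auto
  finally show "dist (shooting_field Psi a v) (shooting_field Psi a w) \<le> (1 + A + Lp) * dist v w"
    by (simp add: algebra_simps)
qed (use assms lipschitz_on_nonneg[OF lip] in simp)

lemma shooting_field_param:
  "norm (shooting_field Psi a1 v - shooting_field Psi a2 v) \<le> \<bar>a1 - a2\<bar> * norm v"
proof -
  have "norm (shooting_field Psi a1 v - shooting_field Psi a2 v) = \<bar>(a1 - a2) * snd v\<bar>"
    by (simp add: shooting_field_def left_diff_distrib)
  also have "\<dots> = \<bar>a1 - a2\<bar> * \<bar>snd v\<bar>"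
    by (rule abs_mult)
  also have "\<dots> \<le> \<bar>a1 - a2\<bar> * norm v"
    using norm_snd_le[of "snd v" "fst v"] by (simp add: mult_left_mono)
  finally show ?thesis .
qed

lemma inert_slope_at_interface:
  fixes theta d1 dd1 :: "real \<Rightarrow> real"
  assumes theta': "\<forall>x\<le>0. (theta has_real_derivative d1 x) (at x within {..0})"
    and d1': "\<forall>x\<le>0. (d1 has_real_derivative dd1 x) (at x within {..0})"
    and ode: "\<forall>x<0. dd1 x + c * d1 x = 0"
    and "(theta \<longlongrightarrow> 0) at_bot" "(d1 \<longlongrightarrow> 0) at_bot"
  shows "d1 0 = - c * theta 0"
proof -
  define g where "g z = d1 z + c * theta z" for z
  have der: "(g has_real_derivative dd1 z + c * d1 z) (at z within {..0})" if "z \<in> {..0}" for z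
    unfolding g_def using theta' d1' that by (auto intro!: derivative_eq_intros)
  have const: "g x = g 0" if "x \<le> 0" for x
    using DERIV_nonneg_imp_mono_within[OF der, of x 0] DERIV_nonpos_imp_antimono_within[OF der, of x 0]
      that ode by fastforce
  have "(g \<longlongrightarrow> 0 + c * 0) at_bot"
    unfolding g_def by (intro tendsto_intros assms(4,5))
  moreover have "eventually (\<lambda>x. g x = g 0) at_bot"
    using const eventually_at_bot_linorder by blast
  ultimately have "((\<lambda>x::real. g 0) \<longlongrightarrow> 0) at_bot"
    by (simp add: tendsto_cong)
  then show ?thesis unfolding g_def by (simp add: tendsto_const_iff)
qed

lemma solves_Pc_gas_branch:
  assumes "solves_Pc eta Qg Qp Psi theta_s c theta"
  shows "\<exists>d2 dd2. (\<forall>x\<ge>0. (theta has_real_derivative d2 x) (at x within {0..})) \<and>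
                     (\<forall>x\<ge>0. (d2 has_real_derivative dd2 x) (at x within {0..})) \<and>
                     (\<forall>x>0. dd2 x = - eta * c * d2 x - Psi (theta x)) \<and>
                     d2 0 = Sfun eta Qg Qp c - eta * c * theta_s c"
proof -
  from assms obtain d1 dd1 d2 dd2 where
    "\<forall>x\<le>0. (theta has_real_derivative d1 x) (at x within {..0})"
    "\<forall>x\<le>0. (d1 has_real_derivative dd1 x) (at x within {..0})"
    "\<forall>x<0. dd1 x + c * d1 x = 0" "(theta \<longlongrightarrow> 0) at_bot" "(d1 \<longlongrightarrow> 0) at_bot"
    and gas: "\<forall>x\<ge>0. (theta has_real_derivative d2 x) (at x within {0..})"
      "\<forall>x\<ge>0. (d2 has_real_derivative dd2 x) (at x within {0..})"
      "\<forall>x>0. dd2 x + eta * c * d2 x = - Psi (theta x)"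
    and "theta 0 = theta_s c" "d2 0 - eta * d1 0 = Sfun eta Qg Qp c"
    unfolding solves_Pc_def by blast
  moreover from this have "d1 0 = - c * theta 0"
    by (intro inert_slope_at_interface)
  ultimately show ?thesis
    by (intro exI[of _ d2] exI[of _ dd2] conjI) (auto simp: algebra_simps)
qed

lemma solves_PcD:
  assumes "solves_Pc eta Qg Qp Psi theta_s c theta"
  shows "0 \<le> theta x" "theta x \<le> 1" "theta 0 = theta_s c" "(theta \<longlongrightarrow> 1) at_top"
  using assms unfolding solves_Pc_def by blast+

lemma no_solution_at_cmax:
  assumes "0 < eta" "0 < Qg" "- Qg < Qp" "cmax < 0" "theta_s cmax = 1"
  shows "\<not> solves_Pc eta Qg Qp Psi theta_s cmax theta"
proof
  assume sol: "solves_Pc eta Qg Qp Psi theta_s cmax theta"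
  obtain d2 where der: "(theta has_real_derivative d2 0) (at 0 within {0..})"
    and slope: "d2 0 = Sfun eta Qg Qp cmax - eta * cmax * theta_s cmax"
    using solves_Pc_gas_branch[OF sol] by auto
  have "d2 0 = eta * (- cmax) * (Qg / (Qp + Qg))"
    using slope assms by (simp add: Sfun_def field_simps)
  also have "\<dots> > 0"
    using assms by (intro mult_pos_pos divide_pos_pos) auto
  finally obtain d where "0 < d" and incr: "\<And>h. 0 < h \<Longrightarrow> h < d \<Longrightarrow> theta 0 < theta h"
    using has_real_derivative_pos_inc_right[OF der] by force
  then have "theta 0 < theta (d / 2)"
    by simp
  moreover have "theta 0 = 1" "theta (d / 2) \<le> 1"
    using solves_PcD[OF sol] assms(5) by auto
  ultimately show False
    by simp
qed

lemma no_solution_at_0: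
  assumes "\<forall>t\<in>{0..1}. 0 \<le> Psi t" "theta_s 0 = 0"
  shows "\<not> solves_Pc eta Qg Qp Psi theta_s 0 theta"
proof
  assume sol: "solves_Pc eta Qg Qp Psi theta_s 0 theta"
  have range: "\<And>x. theta x \<in> {0..1}" and "theta 0 = 0" and lim: "(theta \<longlongrightarrow> 1) at_top"
    using solves_PcD[OF sol] assms(2) by auto
  obtain d2 dd2 where theta': "\<forall>x\<ge>0. (theta has_real_derivative d2 x) (at x within {0..})"
    and d2': "\<forall>x\<ge>0. (d2 has_real_derivative dd2 x) (at x within {0..})"
    and ode: "\<forall>x>0. dd2 x = - eta * 0 * d2 x - Psi (theta x)"
    and slope: "d2 0 = Sfun eta Qg Qp 0 - eta * 0 * theta_s 0"
    using solves_Pc_gas_branch[OF sol] by blast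
  have "dd2 x \<le> 0" if "0 < x" for x
    using ode that range[of x] assms(1) by simp
  then have "d2 x \<le> d2 0" if "0 \<le> x" for x
    using DERIV_nonpos_imp_antimono_within[of "{0..}" d2 dd2 0 x] d2' that by auto
  then have "theta x \<le> theta 0" if "0 \<le> x" for x
    using DERIV_nonpos_imp_antimono_within[of "{0..}" theta d2 0 x] theta' slope that
    by (auto simp: Sfun_def)
  then have nonpos: "theta x \<le> 0" if "0 \<le> x" for x
    using that \<open>theta 0 = 0\<close> by simp
  have "eventually (\<lambda>x. 1 / 2 < theta x \<and> 0 \<le> x) at_top"
    using lim by (intro eventually_conj order_tendstoD(1) eventually_ge_at_top) auto
  then obtain x where "1 / 2 < theta x" "0 \<le> x"
    by (auto simp: eventually_at_top_linorder)
  then show False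
    using nonpos by fastforce
qed

lemma solves_PcI:
  fixes theta d1 dd1 d2 dd2 :: "real \<Rightarrow> real"
  assumes bounds: "\<forall>x. 0 \<le> theta x \<and> theta x \<le> 1" and cont: "continuous_on UNIV theta"
   and der1: "\<forall>x\<le>0. (theta has_real_derivative d1 x) (at x within {..0})"
   and der1': "\<forall>x\<le>0. (d1 has_real_derivative dd1 x) (at x within {..0})"
   and cont1: "continuous_on {..0} dd1"
   and der2: "\<forall>x\<ge>0. (theta has_real_derivative d2 x) (at x within {0..})"
   and der2': "\<forall>x\<ge>0. (d2 has_real_derivative dd2 x) (at x within {0..})"
   and cont2: "continuous_on {0..} dd2"
   and odes: "\<forall>x<0. dd1 x + c * d1 x = 0" "\<forall>x>0. dd2 x + eta * c * d2 x = - Psi (theta x)"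
   and lim_bot: "(theta \<longlongrightarrow> 0) at_bot" and lim_top: "(theta \<longlongrightarrow> 1) at_top"
   and d1_lim: "(d1 \<longlongrightarrow> 0) at_bot" and d2_lim: "(d2 \<longlongrightarrow> 0) at_top"
   and interface: "theta 0 = theta_s c" "d2 0 - eta * d1 0 = Sfun eta Qg Qp c"
  shows "solves_Pc eta Qg Qp Psi theta_s c theta"
    unfolding solves_Pc_def
    by (intro conjI exI[of _ d1] exI[of _ dd1] exI[of _ d2] exI[of _ dd2] bounds cont der1 der1' cont1
          der2 der2' cont2 odes lim_bot lim_top d1_lim d2_lim interface)

lemma inert_branch:
  fixes theta :: "real \<Rightarrow> real"
  assumes "c < 0" and left: "\<And>x. x \<le> 0 \<Longrightarrow> theta x = s * exp (- c * x)"
  shows "\<forall>x\<le>0. (theta has_real_derivative - c * s * exp (- c * x)) (at x within {..0})"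
    and "\<forall>x\<le>0. ((\<lambda>x. - c * s * exp (- c * x)) has_real_derivative c * c * s * exp (- c * x)) (at x within {..0})"
    and "(theta \<longlongrightarrow> 0) at_bot"
    and "((\<lambda>x. - c * s * exp (- c * x)) \<longlongrightarrow> 0) at_bot"
proof -
  show "\<forall>x\<le>0. (theta has_real_derivative - c * s * exp (- c * x)) (at x within {..0})"
  proof (intro allI impI)
    fix x :: real assume "x \<le> 0"
    have "((\<lambda>x. s * exp (- c * x)) has_real_derivative - c * s * exp (- c * x)) (at x within {..0})"
      by (auto intro!: derivative_eq_intros)
    then show "(theta has_real_derivative - c * s * exp (- c * x)) (at x within {..0})"
      by (rule has_field_derivative_transform_within[where d=1]) (simp_all add: \<open>x \<le> 0\<close> left)
  qed
  show "\<forall>x\<le>0. ((\<lambda>x. - c * s * exp (- c * x)) has_real_derivative c * c * s * exp (- c * x)) (at x within {..0})"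
    by (auto intro!: derivative_eq_intros)
  have "filterlim (\<lambda>x. (- c) * x) at_bot at_bot"
    using \<open>c < 0\<close> by (intro filterlim_tendsto_pos_mult_at_bot[OF tendsto_const _ filterlim_ident]) simp
  then have exp0: "((\<lambda>x. exp (- c * x)) \<longlongrightarrow> 0) at_bot"
    using filterlim_compose[OF exp_at_bot] by simp
  then have "((\<lambda>x. s * exp (- c * x)) \<longlongrightarrow> 0) at_bot"
    by (rule tendsto_mult_right_zero)
  moreover have "eventually (\<lambda>x. s * exp (- c * x) = theta x) at_bot"
    using eventually_le_at_bot[of 0] by eventually_elim (simp add: left)
  ultimately show "(theta \<longlongrightarrow> 0) at_bot"
    by (rule Lim_transform_eventually)
  show "((\<lambda>x. - c * s * exp (- c * x)) \<longlongrightarrow> 0) at_bot"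
    using exp0 by (rule tendsto_mult_right_zero)
qed

lemma glued_profile:
  fixes theta t :: "real \<Rightarrow> real"
  assumes "c < 0" "0 \<le> s" "s \<le> 1"
    and left: "\<And>x. x \<le> 0 \<Longrightarrow> theta x = s * exp (- c * x)" and right: "\<And>x. 0 \<le> x \<Longrightarrow> theta x = t x"
    and t_cont: "continuous_on {0..} t" and t_range: "\<And>x. 0 \<le> x \<Longrightarrow> t x \<in> {0..1}"
  shows "\<forall>x. 0 \<le> theta x \<and> theta x \<le> 1" and "continuous_on UNIV theta"
proof -
  show "\<forall>x. 0 \<le> theta x \<and> theta x \<le> 1"
  proof
    fix x :: real
    show "0 \<le> theta x \<and> theta x \<le> 1"
    proof (cases "x < 0")
      case True
      then have "s * exp (- c * x) \<le> 1"
        using assms(2,3) \<open>c < 0\<close> mult_nonpos_nonpos[of c x] by (intro mult_le_one) auto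
      then show ?thesis using left[of x] True \<open>0 \<le> s\<close> by simp
    next
      case False
      then show ?thesis using right[of x] t_range[of x] by simp
    qed
  qed
  have "continuous_on {..0} theta"
    by (rule continuous_on_eq[where f="\<lambda>x. s * exp (- c * x)"]) (auto intro!: continuous_intros simp: left)
  moreover have "continuous_on {0..} theta"
    by (rule continuous_on_eq[OF t_cont]) (simp add: right)
  moreover have "{..0} \<union> {0..} = (UNIV :: real set)" by auto
  ultimately show "continuous_on UNIV theta"
    by (metis closed_atLeast closed_atMost continuous_on_closed_Un)
qed

lemma gas_branch:
  fixes theta t p :: "real \<Rightarrow> real"
  assumes Psi: "continuous_on {0..1} Psi" and right: "\<And>x. 0 \<le> x \<Longrightarrow> theta x = t x"
    and t_range: "\<And>x. 0 \<le> x \<Longrightarrow> t x \<in> {0..1}"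
    and t': "\<And>x. 0 \<le> x \<Longrightarrow> (t has_real_derivative p x) (at x within {0..})"
    and p': "\<And>x. 0 \<le> x \<Longrightarrow> (p has_real_derivative a * p x - Psi (t x)) (at x within {0..})"
    and "(t \<longlongrightarrow> 1) at_top"
  shows "\<forall>x\<ge>0. (theta has_real_derivative p x) (at x within {0..})"
    and "\<forall>x\<ge>0. (p has_real_derivative a * p x - Psi (theta x)) (at x within {0..})"
    and "continuous_on {0..} (\<lambda>x. a * p x - Psi (theta x))"
    and "(theta \<longlongrightarrow> 1) at_top"
proof -
  show "\<forall>x\<ge>0. (theta has_real_derivative p x) (at x within {0..})"
  proof (intro allI impI)
    fix x :: real assume "0 \<le> x"
    show "(theta has_real_derivative p x) (at x within {0..})"
      by (rule has_field_derivative_transform_within[OF t'[OF \<open>0 \<le> x\<close>], where d=1])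
         (simp_all add: \<open>0 \<le> x\<close> right)
  qed
  show "\<forall>x\<ge>0. (p has_real_derivative a * p x - Psi (theta x)) (at x within {0..})"
    using p' by (simp add: right)
  have t_cont: "continuous_on {0..} t" and p_cont: "continuous_on {0..} p"
    using DERIV_continuous_on[of "{0..}" t p] DERIV_continuous_on[of "{0..}" p "\<lambda>x. a * p x - Psi (t x)"]
      t' p' by auto
  have "continuous_on {0..} (\<lambda>x. Psi (t x))"
    by (rule continuous_on_compose2[OF Psi t_cont], rule image_subsetI, rule t_range) simp
  then have "continuous_on {0..} (\<lambda>x. a * p x - Psi (t x))"
    by (intro continuous_on_diff continuous_on_mult_left p_cont)
  then show "continuous_on {0..} (\<lambda>x. a * p x - Psi (theta x))"
    by (rule continuous_on_eq) (simp add: right)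
  have "eventually (\<lambda>x. t x = theta x) at_top"
    using eventually_ge_at_top[of 0] by eventually_elim (simp add: right)
  with \<open>(t \<longlongrightarrow> 1) at_top\<close> show "(theta \<longlongrightarrow> 1) at_top"
    by (rule Lim_transform_eventually)
qed

text \<open>On the inert side \<open>\<theta> = \<theta>\<^sub>s(c) e\<^sup>-\<^sup>c\<^sup>x\<close>, so a solution of \<open>(P\<^sub>c)\<close> is the same as a gas-phase
  branch on \<open>[0, \<infinity>)\<close> whose initial slope is dictated by the interface balance.\<close>

lemma solves_Pc_of_gas_branch:
  fixes t p :: "real \<Rightarrow> real"
  assumes "c < 0" and Psi: "continuous_on {0..1} Psi"
    and t_range: "\<And>x. 0 \<le> x \<Longrightarrow> t x \<in> {0..1}"
    and t': "\<And>x. 0 \<le> x \<Longrightarrow> (t has_real_derivative p x) (at x within {0..})"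
    and p': "\<And>x. 0 \<le> x \<Longrightarrow> (p has_real_derivative - eta * c * p x - Psi (t x)) (at x within {0..})"
    and t0: "t 0 = theta_s c" and p0: "p 0 = Sfun eta Qg Qp c - eta * c * theta_s c"
    and "(t \<longlongrightarrow> 1) at_top" "(p \<longlongrightarrow> 0) at_top"
  shows "\<exists>theta. solves_Pc eta Qg Qp Psi theta_s c theta"
proof -
  let ?s = "theta_s c"
  define theta where "theta x = (if x < 0 then ?s * exp (- c * x) else t x)" for x
  have left: "theta x = ?s * exp (- c * x)" if "x \<le> 0" for x
    using that t0 by (auto simp: theta_def)
  have right: "theta x = t x" if "0 \<le> x" for x
    using that by (simp add: theta_def)
  have "continuous_on {0..} t"
    using DERIV_continuous_on[of "{0..}" t p] t' by auto
  moreover have "0 \<le> ?s" "?s \<le> 1" using t_range[of 0] t0 by auto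
  ultimately have profile: "\<forall>x. 0 \<le> theta x \<and> theta x \<le> 1" "continuous_on UNIV theta"
    using glued_profile[OF \<open>c < 0\<close> _ _ left right _ t_range] by auto
  have inert: "\<forall>x\<le>0. (theta has_real_derivative - c * ?s * exp (- c * x)) (at x within {..0})"
    "\<forall>x\<le>0. ((\<lambda>x. - c * ?s * exp (- c * x)) has_real_derivative c * c * ?s * exp (- c * x)) (at x within {..0})"
    "(theta \<longlongrightarrow> 0) at_bot" "((\<lambda>x. - c * ?s * exp (- c * x)) \<longlongrightarrow> 0) at_bot"
    using inert_branch[OF \<open>c < 0\<close> left] by auto
  have gas: "\<forall>x\<ge>0. (theta has_real_derivative p x) (at x within {0..})"
    "\<forall>x\<ge>0. (p has_real_derivative - eta * c * p x - Psi (theta x)) (at x within {0..})"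
    "continuous_on {0..} (\<lambda>x. - eta * c * p x - Psi (theta x))" "(theta \<longlongrightarrow> 1) at_top"
    using gas_branch[OF Psi _ t_range t' p' \<open>(t \<longlongrightarrow> 1) at_top\<close>, of theta] right by auto
  have cont1: "continuous_on {..0} (\<lambda>x. c * c * ?s * exp (- c * x))"
    by (intro continuous_intros)
  have odes: "\<forall>x<0. c * c * ?s * exp (- c * x) + c * (- c * ?s * exp (- c * x)) = 0"
    "\<forall>x>0. - eta * c * p x - Psi (theta x) + eta * c * p x = - Psi (theta x)"
    by (simp_all add: algebra_simps)
  have interface: "theta 0 = theta_s c" "p 0 - eta * (- c * ?s * exp (- c * 0)) = Sfun eta Qg Qp c"
    using t0 p0 right[of 0] by (simp_all add: algebra_simps)
  have "solves_Pc eta Qg Qp Psi theta_s c theta"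
    by (rule solves_PcI)
       (fact profile inert(1,2) cont1 gas(1-3) odes inert(3) gas(4) inert(4) \<open>(p \<longlongrightarrow> 0) at_top\<close> interface)+
  then show ?thesis by blast
qed

section \<open>Shooting\<close>

locale shooting =
  fixes eta Qg Qp cmax Lp :: real and Psi theta_s :: "real \<Rightarrow> real"
  assumes eta_pos: "0 < eta" and Qg_pos: "0 < Qg" and Qp_gt: "- Qg < Qp"
    and Psi_pos: "\<forall>t\<in>{0..<1}. 0 < Psi t" and Psi_1: "Psi 1 = 0"
    and Psi_lipschitz: "Lp-lipschitz_on {0..1} Psi"
    and cmax_neg: "cmax < 0"
    and ths_cont: "continuous_on {cmax..0} theta_s"
    and ths_decr: "strict_antimono_on {cmax..0} theta_s"
    and ths_0: "theta_s 0 = 0" and ths_cmax: "theta_s cmax = 1"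
begin

text \<open>A Lipschitz constant of \<open>field c\<close> for every \<open>c \<in> [c\<^sub>m\<^sub>a\<^sub>x, 0]\<close>: using one Bielecki weight for
  all speeds is what makes the orbits depend continuously on \<open>c\<close>.\<close>

definition lip_bound :: real where "lip_bound = 1 + - eta * cmax + Lp"

abbreviation field :: "real \<Rightarrow> real \<times> real \<Rightarrow> real \<times> real" where
  "field c \<equiv> shooting_field Psi (- eta * c)"

text \<open>The initial slope is \<open>\<theta>'(0\<^sup>+) = S(c) + \<eta> \<theta>'(0\<^sup>-)\<close> with \<open>\<theta>'(0\<^sup>-) = -c \<theta>\<^sub>s(c)\<close>.\<close>

definition init :: "real \<Rightarrow> real \<times> real" where
  "init c = (theta_s c, Sfun eta Qg Qp c - eta * c * theta_s c)"

definition orbit :: "real \<Rightarrow> real \<Rightarrow> real \<times> real" where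
  "orbit c = picard_solution (field c) (init c) (2 * lip_bound)"

abbreviation th :: "real \<Rightarrow> real \<Rightarrow> real" where "th c x \<equiv> fst (orbit c x)"

abbreviation dth :: "real \<Rightarrow> real \<Rightarrow> real" where "dth c x \<equiv> snd (orbit c x)"

abbreviation turns_back :: "real \<Rightarrow> bool" where
  "turns_back c \<equiv> \<exists>x\<ge>0. dth c x < 0 \<and> (\<forall>y\<in>{0..x}. th c y < 1)"

abbreviation overshoots :: "real \<Rightarrow> bool" where
  "overshoots c \<equiv> \<exists>x\<ge>0. 1 < th c x \<and> (\<forall>y\<in>{0..x}. 0 < dth c y)"

lemma Lp_nonneg: "0 \<le> Lp"
  by (rule lipschitz_on_nonneg[OF Psi_lipschitz])

lemma lip_bound_pos: "0 < lip_bound"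
  using mult_pos_neg[OF eta_pos cmax_neg] Lp_nonneg by (simp add: lip_bound_def)

lemma field_lipschitz: "c \<in> {cmax..0} \<Longrightarrow> lip_bound-lipschitz_on UNIV (field c)"
  unfolding lip_bound_def
  by (rule shooting_field_lipschitz[OF Psi_lipschitz]) (use eta_pos in \<open>auto simp: mult_nonneg_nonpos\<close>)

lemma theta_s_bounds:
  assumes "c \<in> {cmax<..<0}"
  shows "0 < theta_s c" "theta_s c < 1"
  using ths_decr assms ths_0 ths_cmax cmax_neg unfolding monotone_on_def by force+

lemma orbit_0: "c \<in> {cmax..0} \<Longrightarrow> orbit c 0 = init c"
  unfolding orbit_def using picard_solution_0[OF field_lipschitz] lip_bound_pos by simp

lemma orbit_has_vector_derivative:
  "c \<in> {cmax..0} \<Longrightarrow> 0 \<le> x \<Longrightarrow> (orbit c has_vector_derivative field c (orbit c x)) (at x within {0..})"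
  unfolding orbit_def using picard_solution_has_vector_derivative[OF field_lipschitz] lip_bound_pos by simp

lemma th_has_derivative:
  "c \<in> {cmax..0} \<Longrightarrow> 0 \<le> x \<Longrightarrow> ((\<lambda>x. th c x) has_real_derivative dth c x) (at x within {0..})"
  using has_real_derivative_fst[OF orbit_has_vector_derivative] by (simp add: shooting_field_def)

lemma dth_has_derivative:
  "c \<in> {cmax..0} \<Longrightarrow> 0 \<le> x \<Longrightarrow>
    ((\<lambda>x. dth c x) has_real_derivative - eta * c * dth c x - Psi (clamp 0 1 (th c x))) (at x within {0..})"
  using has_real_derivative_snd[OF orbit_has_vector_derivative] by (simp add: shooting_field_def)

lemma isCont_th: "isCont (\<lambda>x. th c x) x" and isCont_dth: "isCont (\<lambda>x. dth c x) x"
  using continuous_on_picard_solution[of "field c" "init c" "2 * lip_bound"]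
  by (auto intro!: continuous_intros simp: continuous_on_eq_continuous_at orbit_def)

lemma orbit_continuous_in_speed:
  assumes c: "c \<in> {cmax..0}" and "0 < e"
  shows "\<exists>d>0. \<forall>c'\<in>{cmax..0}. dist c' c < d \<longrightarrow> (\<forall>z\<in>{0..X}. dist (orbit c' z) (orbit c z) < e)"
proof -
  let ?L = "2 * lip_bound" and ?w = "\<lambda>c. picard_fixpoint (field c) (init c) (2 * lip_bound)"
  define bound where "bound c' = 2 * (norm (init c - init c') + \<bar>- eta * c - - eta * c'\<bar> * norm (?w c) / ?L)" for c'
  have dist_le: "dist (?w c') (?w c) \<le> bound c'" if "c' \<in> {cmax..0}" for c'
    unfolding bound_def dist_commute[of "?w c'"] using lip_bound_pos
    by (intro picard_fixpoint_dist[OF field_lipschitz[OF c] field_lipschitz[OF that]] shooting_field_param) auto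
  have "continuous_on {cmax..0} bound"
    unfolding bound_def[abs_def] init_def Sfun_def using ths_cont Qp_gt lip_bound_pos by (auto intro!: continuous_intros)
  moreover have "0 < e / exp (?L * X)" using \<open>0 < e\<close> by simp
  ultimately obtain d where "0 < d"
    and d: "\<forall>c'\<in>{cmax..0}. dist c' c < d \<longrightarrow> dist (bound c') (bound c) < e / exp (?L * X)"
    using c unfolding continuous_on_iff by blast
  show ?thesis
  proof (intro exI[of _ d] conjI ballI impI \<open>0 < d\<close>)
    fix c' z assume c': "c' \<in> {cmax..0}" "dist c' c < d" and z: "z \<in> {0..X}"
    have "dist (orbit c' z) (orbit c z) = exp (?L * z) * dist (?w c' z) (?w c z)"
      by (simp add: orbit_def picard_solution_def dist_norm flip: scaleR_diff_right)
    also have "\<dots> \<le> exp (?L * X) * dist (?w c') (?w c)"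
      using z lip_bound_pos by (intro mult_mono dist_bounded) auto
    also have "\<dots> \<le> exp (?L * X) * bound c'"
      using dist_le[OF c'(1)] by (simp add: mult_left_mono)
    also have "\<dots> < e"
    proof -
      have "\<bar>bound c' - bound c\<bar> < e / exp (?L * X)" and "bound c = 0"
        using d c' by (simp_all add: dist_real_def bound_def[of c])
      then have "bound c' < e / exp (?L * X)" by simp
      then show ?thesis by (simp add: pos_less_divide_eq mult.commute)
    qed
    finally show "dist (orbit c' z) (orbit c z) < e" .
  qed
qed

lemma not_turns_back_and_overshoots: "\<not> (turns_back c \<and> overshoots c)"
proof
  assume "turns_back c \<and> overshoots c"
  then obtain x1 x2 where x1: "0 \<le> x1" "dth c x1 < 0" and below: "\<forall>y\<in>{0..x1}. th c y < 1"
    and x2: "0 \<le> x2" "1 < th c x2" and above: "\<forall>y\<in>{0..x2}. 0 < dth c y"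
    by blast
  show False
  proof (cases "x1 \<le> x2")
    case True
    then show False using above[rule_format, of x1] x1 by simp
  next
    case False
    then show False using below[rule_format, of x2] x2 by simp
  qed
qed

lemma orbit_close_components:
  assumes "dist (orbit c' z) (orbit c z) < m"
  shows "th c z - m < th c' z" "th c' z < th c z + m" "dth c z - m < dth c' z" "dth c' z < dth c z + m"
  using le_less_trans[OF dist_fst_le assms] le_less_trans[OF dist_snd_le assms]
  by (auto simp: dist_real_def abs_less_iff)

lemma openin_turns_back: "openin (top_of_set {cmax..0}) {c \<in> {cmax..0}. turns_back c}"
  unfolding openin_euclidean_subtopology_iff
proof (intro conjI ballI)
  fix c assume "c \<in> {c \<in> {cmax..0}. turns_back c}"
  then obtain x where c: "c \<in> {cmax..0}" and "0 \<le> x" "dth c x < 0" and below: "\<forall>y\<in>{0..x}. th c y < 1"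
    by blast
  have "continuous_on {0..x} (\<lambda>y. th c y)"
    using isCont_th by (intro continuous_at_imp_continuous_on) auto
  then obtain z where "z \<in> {0..x}" and max: "\<forall>y\<in>{0..x}. th c y \<le> th c z"
    using continuous_attains_sup[OF compact_Icc, of 0 x "\<lambda>y. th c y"] \<open>0 \<le> x\<close> by auto
  define m where "m = min (1 - th c z) (- dth c x)"
  have "0 < m" using below \<open>z \<in> {0..x}\<close> \<open>dth c x < 0\<close> by (simp add: m_def)
  then obtain d where "0 < d"
    and d: "\<forall>c'\<in>{cmax..0}. dist c' c < d \<longrightarrow> (\<forall>z\<in>{0..x}. dist (orbit c' z) (orbit c z) < m)"
    using orbit_continuous_in_speed[OF c] by blast
  show "\<exists>d>0. \<forall>c'\<in>{cmax..0}. dist c' c < d \<longrightarrow> c' \<in> {c \<in> {cmax..0}. turns_back c}"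
  proof (intro exI[of _ d] conjI ballI impI \<open>0 < d\<close>)
    fix c' assume c': "c' \<in> {cmax..0}" "dist c' c < d"
    have close: "dist (orbit c' y) (orbit c y) < m" if "y \<in> {0..x}" for y
      using d c' that by blast
    have "dth c' x < 0"
      using orbit_close_components(4)[OF close[of x]] \<open>0 \<le> x\<close> by (simp add: m_def)
    moreover have "th c' y < 1" if "y \<in> {0..x}" for y
      using orbit_close_components(2)[OF close[OF that]] max[rule_format, OF that] by (simp add: m_def)
    ultimately show "c' \<in> {c \<in> {cmax..0}. turns_back c}"
      using c'(1) \<open>0 \<le> x\<close> by blast
  qed
qed auto

lemma openin_overshoots: "openin (top_of_set {cmax..0}) {c \<in> {cmax..0}. overshoots c}"
  unfolding openin_euclidean_subtopology_iff
proof (intro conjI ballI)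
  fix c assume "c \<in> {c \<in> {cmax..0}. overshoots c}"
  then obtain x where c: "c \<in> {cmax..0}" and "0 \<le> x" "1 < th c x" and above: "\<forall>y\<in>{0..x}. 0 < dth c y"
    by blast
  have "continuous_on {0..x} (\<lambda>y. dth c y)"
    using isCont_dth by (intro continuous_at_imp_continuous_on) auto
  then obtain z where "z \<in> {0..x}" and min: "\<forall>y\<in>{0..x}. dth c z \<le> dth c y"
    using continuous_attains_inf[OF compact_Icc, of 0 x "\<lambda>y. dth c y"] \<open>0 \<le> x\<close> by auto
  define m where "m = min (dth c z) (th c x - 1)"
  have "0 < m" using above \<open>z \<in> {0..x}\<close> \<open>1 < th c x\<close> by (simp add: m_def)
  then obtain d where "0 < d"
    and d: "\<forall>c'\<in>{cmax..0}. dist c' c < d \<longrightarrow> (\<forall>z\<in>{0..x}. dist (orbit c' z) (orbit c z) < m)"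
    using orbit_continuous_in_speed[OF c] by blast
  show "\<exists>d>0. \<forall>c'\<in>{cmax..0}. dist c' c < d \<longrightarrow> c' \<in> {c \<in> {cmax..0}. overshoots c}"
  proof (intro exI[of _ d] conjI ballI impI \<open>0 < d\<close>)
    fix c' assume c': "c' \<in> {cmax..0}" "dist c' c < d"
    have close: "dist (orbit c' y) (orbit c y) < m" if "y \<in> {0..x}" for y
      using d c' that by blast
    have "1 < th c' x"
      using orbit_close_components(1)[OF close[of x]] \<open>0 \<le> x\<close> by (simp add: m_def)
    moreover have "0 < dth c' y" if "y \<in> {0..x}" for y
      using orbit_close_components(3)[OF close[OF that]] min[rule_format, OF that] by (simp add: m_def)
    ultimately show "c' \<in> {c \<in> {cmax..0}. overshoots c}"
      using c'(1) \<open>0 \<le> x\<close> by blast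
  qed
qed auto

lemma turns_back_0: "turns_back 0"
proof -
  have c0: "(0::real) \<in> {cmax..0}" using cmax_neg by simp
  have orbit00: "th 0 0 = 0" "dth 0 0 = 0"
    using orbit_0[OF c0] ths_0 by (simp_all add: init_def Sfun_def)
  have "((\<lambda>x. - dth 0 x) has_real_derivative Psi 0) (at 0 within {0..})"
    using DERIV_minus[OF dth_has_derivative[OF c0 order.refl]] orbit00 by simp
  moreover have "0 < Psi 0" using Psi_pos by simp
  moreover have "th 0 0 < 1" using orbit00 by simp
  ultimately obtain x where "0 < x" "- dth 0 0 < - dth 0 x" and below: "\<And>y. y \<in> {0..x} \<Longrightarrow> th 0 y < 1"
    using DERIV_pos_exit_right[of "\<lambda>x. - dth 0 x" "Psi 0" 0 "\<lambda>x. th 0 x" 1] isCont_th by blast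
  then have "dth 0 x < 0" using orbit00 by simp
  then show ?thesis
    using \<open>0 < x\<close> below by (intro exI[of _ x]) auto
qed

lemma overshoots_cmax: "overshoots cmax"
proof -
  have c: "cmax \<in> {cmax..0}" using cmax_neg by simp
  have "dth cmax 0 = - eta * cmax * Qg / (Qp + Qg)"
    using orbit_0[OF c] ths_cmax Qp_gt by (simp add: init_def Sfun_def field_simps)
  also have "0 < - eta * cmax"
    using mult_pos_neg[OF eta_pos cmax_neg] by simp
  then have "0 < - eta * cmax * Qg / (Qp + Qg)"
    by (rule divide_pos_pos[OF mult_pos_pos[OF _ Qg_pos]]) (use Qp_gt in simp)
  finally have slope: "0 < dth cmax 0" .
  have "th cmax 0 = 1" using orbit_0[OF c] ths_cmax by (simp add: init_def)
  obtain x where "0 < x" "th cmax 0 < th cmax x" and above: "\<And>y. y \<in> {0..x} \<Longrightarrow> - dth cmax y < 0"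
    using DERIV_pos_exit_right[OF th_has_derivative[OF c order.refl] slope, of "\<lambda>x. - dth cmax x" 0]
      slope isCont_dth by (auto intro: continuous_intros)
  with \<open>th cmax 0 = 1\<close> show ?thesis
    by (intro exI[of _ x]) auto
qed

lemma exists_trapped_speed: "\<exists>c\<in>{cmax<..<0}. \<not> turns_back c \<and> \<not> overshoots c"
proof (rule ccontr)
  assume none: "\<not> ?thesis"
  let ?A = "{c \<in> {cmax..0}. turns_back c}" and ?B = "{c \<in> {cmax..0}. overshoots c}"
  have "0 \<in> ?A" using turns_back_0 cmax_neg by simp
  have "cmax \<in> ?B" using overshoots_cmax cmax_neg by simp
  have "{cmax..0} \<subseteq> ?A \<union> ?B"
  proof
    fix c assume c: "c \<in> {cmax..0}"
    show "c \<in> ?A \<union> ?B"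
    proof (cases "c = 0 \<or> c = cmax")
      case True
      then show ?thesis using \<open>0 \<in> ?A\<close> \<open>cmax \<in> ?B\<close> by blast
    next
      case False
      then show ?thesis using c none by auto
    qed
  qed
  moreover have "?A \<inter> ?B = {}" using not_turns_back_and_overshoots by blast
  moreover have "?A \<noteq> {}" "?B \<noteq> {}"
    using \<open>0 \<in> ?A\<close> \<open>cmax \<in> ?B\<close> by blast+
  ultimately have "\<exists>E1 E2. openin (top_of_set {cmax..0}) E1 \<and> openin (top_of_set {cmax..0}) E2 \<and>
      {cmax..0} \<subseteq> E1 \<union> E2 \<and> E1 \<inter> E2 = {} \<and> E1 \<noteq> {} \<and> E2 \<noteq> {}"
    using openin_turns_back openin_overshoots by blast
  then show False
    using connected_Icc[of cmax 0] unfolding connected_openin by blast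
qed

lemma Psi_continuous: "continuous_on {0..1} Psi"
  by (rule lipschitz_on_continuous_on[OF Psi_lipschitz])

lemma continuous_on_th: "continuous_on A (\<lambda>x. th c x)"
  and continuous_on_dth: "continuous_on A (\<lambda>x. dth c x)"
  using isCont_th isCont_dth by (simp_all add: continuous_at_imp_continuous_on)

lemma Psi_clamp_bound: "\<bar>Psi (clamp 0 1 t)\<bar> \<le> Lp * \<bar>1 - t\<bar>"
proof -
  have "dist (Psi (clamp 0 1 t)) (Psi (clamp 0 1 1)) \<le> Lp * dist (clamp 0 1 t) (clamp 0 1 (1::real))"
    by (rule lipschitz_onD[OF Psi_lipschitz]) (simp_all only: clamp_in_interval_real)
  also have "\<dots> \<le> Lp * dist t 1"
    using dist_clamps_le_dist_args[of 0 1 t 1] Lp_nonneg by (intro mult_left_mono) auto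
  finally show ?thesis
    using Psi_1 by (simp add: dist_real_def abs_minus_commute)
qed

lemma orbit_avoids_equilibrium:
  assumes c: "c \<in> {cmax..0}" and "theta_s c < 1" and "0 \<le> x"
  shows "0 < (1 - th c x) * (1 - th c x) + dth c x * dth c x"
proof (rule energy_stays_pos[where t="\<lambda>x. th c x" and p="\<lambda>x. dth c x" and a="- eta * c" and P="\<lambda>z. Psi (clamp 0 1 (th c z))"])
  show "((\<lambda>x. th c x) has_real_derivative dth c z) (at z within {0..})" if "0 \<le> z" for z
    by (rule th_has_derivative[OF c that])
  show "((\<lambda>x. dth c x) has_real_derivative - eta * c * dth c z - Psi (clamp 0 1 (th c z))) (at z within {0..})"
    if "0 \<le> z" for z
    by (rule dth_has_derivative[OF c that])
  show "0 \<le> - eta * c" using c eta_pos by (simp add: mult_nonneg_nonpos)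
  have "0 < (1 - theta_s c) * (1 - theta_s c)"
    using \<open>theta_s c < 1\<close> by (simp add: mult_pos_pos)
  then show "0 < (1 - th c 0) * (1 - th c 0) + dth c 0 * dth c 0"
    using orbit_0[OF c] by (simp add: init_def add_pos_nonneg)
qed (use Lp_nonneg Psi_clamp_bound \<open>0 \<le> x\<close> in auto)

lemma turns_back_if_stalls:
  assumes c: "c \<in> {cmax..0}" and "0 \<le> s" and "dth c s = 0" and th_s: "th c s \<in> {0..<1}"
    and before: "\<forall>y\<in>{0..<s}. th c y < 1"
  shows "turns_back c"
proof -
  have "((\<lambda>x. - dth c x) has_real_derivative Psi (th c s)) (at s within {0..})"
    using DERIV_minus[OF dth_has_derivative[OF c \<open>0 \<le> s\<close>]] \<open>dth c s = 0\<close> th_s by simp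
  then have "((\<lambda>x. - dth c x) has_real_derivative Psi (th c s)) (at s within {s..})"
    by (rule DERIV_subset) (use \<open>0 \<le> s\<close> in auto)
  moreover have "0 < Psi (th c s)" using Psi_pos th_s by simp
  moreover have "th c s < 1" using th_s by simp
  ultimately obtain x where "s < x" "- dth c s < - dth c x" and after: "\<And>y. y \<in> {s..x} \<Longrightarrow> th c y < 1"
    using DERIV_pos_exit_right[OF _ _ isCont_th] by blast
  moreover have "th c y < 1" if "y \<in> {0..x}" for y
    using before after[of y] that by (cases "y < s") auto
  ultimately show ?thesis
    using \<open>0 \<le> s\<close> \<open>dth c s = 0\<close> by (intro exI[of _ x]) auto
qed

lemma overshoots_if_crosses:
  assumes c: "c \<in> {cmax..0}" and "0 \<le> s" and "th c s = 1" and "0 < dth c s"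
    and before: "\<forall>y\<in>{0..<s}. 0 < dth c y"
  shows "overshoots c"
proof -
  have "((\<lambda>x. th c x) has_real_derivative dth c s) (at s within {s..})"
    by (rule DERIV_subset[OF th_has_derivative[OF c \<open>0 \<le> s\<close>]]) (use \<open>0 \<le> s\<close> in auto)
  moreover have "isCont (\<lambda>x. - dth c x) s" by (rule isCont_minus[OF isCont_dth])
  moreover have "- dth c s < 0" using \<open>0 < dth c s\<close> by simp
  ultimately obtain x where "s < x" "th c s < th c x" and after: "\<And>y. y \<in> {s..x} \<Longrightarrow> - dth c y < 0"
    using DERIV_pos_exit_right \<open>0 < dth c s\<close> by blast
  moreover have "0 < dth c y" if "y \<in> {0..x}" for y
    using before after[of y] that by (cases "y < s") auto
  ultimately show ?thesis
    using \<open>0 \<le> s\<close> \<open>th c s = 1\<close> by (intro exI[of _ x]) auto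
qed

lemma state_at_first_exit:
  assumes c: "c \<in> {cmax<..<0}" and "0 \<le> s"
    and before: "\<And>y. 0 \<le> y \<Longrightarrow> y < s \<Longrightarrow> 0 < dth c y \<and> th c y < 1"
  shows "th c s \<in> {0..1}" and "0 < s \<Longrightarrow> 0 \<le> dth c s"
proof -
  have c': "c \<in> {cmax..0}" using c by auto
  have th0: "th c 0 = theta_s c" using orbit_0[OF c'] by (simp add: init_def)
  have "th c 0 \<le> th c s"
    using \<open>0 \<le> s\<close> before by (intro DERIV_nonneg_imp_mono_within[OF th_has_derivative[OF c']]) (auto simp: less_imp_le)
  moreover have "th c s \<le> 1"
  proof (cases "s = 0")
    case True
    then show ?thesis using th0 theta_s_bounds[OF c] by simp
  next
    case False
    with \<open>0 \<le> s\<close> have "0 < s" by simp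
    show ?thesis
    proof (rule isCont_left_upper_bound[OF isCont_th \<open>0 < s\<close>])
      show "th c y \<le> 1" if "0 < y" "y < s" for y
        using before[of y] that by simp
    qed
  qed
  ultimately show "th c s \<in> {0..1}"
    using th0 theta_s_bounds[OF c] by simp
  assume "0 < s"
  have "- dth c s \<le> 0"
  proof (rule isCont_left_upper_bound[OF isCont_minus[OF isCont_dth] \<open>0 < s\<close>])
    show "- dth c y \<le> 0" if "0 < y" "y < s" for y
      using before[of y] that by simp
  qed
  then show "0 \<le> dth c s" by simp
qed

text \<open>For a speed that neither turns back nor overshoots, look at the first time \<open>s\<close> at which
  \<open>\<theta>' \<le> 0\<close> or \<open>\<theta> \<ge> 1\<close>: the energy bound excludes \<open>(\<theta>, \<theta>') = (1, 0)\<close> there, and every other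
  configuration makes the orbit turn back or overshoot right after \<open>s\<close>.\<close>

lemma trapped_orbit:
  assumes c: "c \<in> {cmax<..<0}" and "\<not> turns_back c" "\<not> overshoots c" and "0 \<le> x"
  shows "0 < dth c x \<and> th c x < 1"
proof (rule ccontr)
  assume "\<not> (0 < dth c x \<and> th c x < 1)"
  have c': "c \<in> {cmax..0}" using c by auto
  define S where "S = ({0..} \<inter> (\<lambda>y. dth c y) -` {..0}) \<union> ({0..} \<inter> (\<lambda>y. th c y) -` {1..})"
  have "closed S"
    unfolding S_def by (intro closed_Un continuous_closed_preimage continuous_on_th continuous_on_dth) auto
  moreover have "x \<in> S" using \<open>\<not> (0 < dth c x \<and> th c x < 1)\<close> \<open>0 \<le> x\<close> by (auto simp: S_def)
  moreover have "bdd_below S" by (auto simp: S_def intro: bdd_belowI[of _ 0])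
  ultimately have "Inf S \<in> S" by (intro closed_contains_Inf) auto
  define s where "s = Inf S"
  have "s \<in> S" using \<open>Inf S \<in> S\<close> by (simp add: s_def)
  then have "0 \<le> s" by (auto simp: S_def)
  have before: "0 < dth c y \<and> th c y < 1" if "0 \<le> y" "y < s" for y
  proof (rule ccontr)
    assume "\<not> (0 < dth c y \<and> th c y < 1)"
    then have "y \<in> S" using \<open>0 \<le> y\<close> by (auto simp: S_def)
    then show False using cInf_lower[OF _ \<open>bdd_below S\<close>, of y] \<open>y < s\<close> by (simp add: s_def)
  qed
  note exit = state_at_first_exit[OF c \<open>0 \<le> s\<close> before]
  have energy: "0 < (1 - th c s) * (1 - th c s) + dth c s * dth c s"
    by (rule orbit_avoids_equilibrium[OF c' _ \<open>0 \<le> s\<close>]) (use theta_s_bounds[OF c] in simp)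
  consider "dth c s < 0" | "dth c s = 0" | "0 < dth c s" by linarith
  then show False
  proof cases
    case 1
    then have "s = 0" using exit(2) \<open>0 \<le> s\<close> by force
    then have "turns_back c"
      using 1 orbit_0[OF c'] theta_s_bounds[OF c] by (intro exI[of _ 0]) (auto simp: init_def)
    with assms(2) show False ..
  next
    case 2
    then have "th c s \<in> {0..<1}" using energy exit(1) by (cases "th c s = 1") auto
    then have "turns_back c"
      using turns_back_if_stalls[OF c' \<open>0 \<le> s\<close> 2] before by auto
    with assms(2) show False ..
  next
    case 3
    then have "th c s = 1" using \<open>s \<in> S\<close> exit(1) by (auto simp: S_def)
    then have "overshoots c"
      using overshoots_if_crosses[OF c' \<open>0 \<le> s\<close> _ 3] before by auto
    with assms(3) show False ..
  qed
qed

lemma th_mono: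
  assumes "c \<in> {cmax<..<0}" "\<not> turns_back c" "\<not> overshoots c" and "0 \<le> x" "x \<le> y"
  shows "th c x \<le> th c y"
proof -
  have der: "((\<lambda>x. th c x) has_real_derivative dth c z) (at z within {0..})" if "z \<in> {0..}" for z
    using th_has_derivative[of c z] assms(1) that by simp
  have nonneg: "0 \<le> dth c z" if "x < z" "z < y" for z
    using trapped_orbit[OF assms(1-3), of z] that \<open>0 \<le> x\<close> by simp
  show ?thesis
    by (rule DERIV_nonneg_imp_mono_within[OF der _ \<open>x \<le> y\<close> nonneg]) (use \<open>0 \<le> x\<close> in auto)
qed

lemma th_range:
  assumes "c \<in> {cmax<..<0}" "\<not> turns_back c" "\<not> overshoots c" and "0 \<le> x"
  shows "th c x \<in> {theta_s c..<1}"
  using th_mono[OF assms(1-3) order.refl \<open>0 \<le> x\<close>] trapped_orbit[OF assms] orbit_0[of c] assms(1)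
  by (simp add: init_def)

lemma trapped_dth_not_bounded_below:
  assumes c: "c \<in> {cmax<..<0}" and "\<not> turns_back c" "\<not> overshoots c"
    and "0 \<le> x0" "0 < \<delta>" and dth_ge: "\<And>z. x0 \<le> z \<Longrightarrow> \<delta> \<le> dth c z"
  shows False
proof -
  have c': "c \<in> {cmax..0}" using c by auto
  have "th c x0 + \<delta> * (x0 + 1 / \<delta> - x0) \<le> th c (x0 + 1 / \<delta>)"
  proof (rule DERIV_barrier_linear_growth[where f="\<lambda>x. th c x" and f'="\<lambda>x. dth c x"])
    show "((\<lambda>x. th c x) has_real_derivative dth c z) (at z within {x0..})" if "x0 \<le> z" for z
      by (rule DERIV_subset[OF th_has_derivative[OF c']]) (use that \<open>0 \<le> x0\<close> in auto)
  qed (use dth_ge \<open>0 < \<delta>\<close> in auto)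
  then show False
    using trapped_orbit[OF assms(1-3), of "x0 + 1 / \<delta>"] th_range[OF assms(1-3) \<open>0 \<le> x0\<close>]
      theta_s_bounds[OF c] \<open>0 < \<delta>\<close> \<open>0 \<le> x0\<close> by simp
qed

lemma th_tendsto_1:
  assumes c: "c \<in> {cmax<..<0}" and "\<not> turns_back c" "\<not> overshoots c"
  shows "((\<lambda>x. th c x) \<longlongrightarrow> 1) at_top"
proof (rule order_tendstoI)
  fix y :: real assume "1 < y"
  have below_y: "th c x < y" if "0 \<le> x" for x
    using trapped_orbit[OF assms that] \<open>1 < y\<close> by simp
  show "eventually (\<lambda>x. th c x < y) at_top"
    by (rule eventually_mono[OF eventually_ge_at_top[of 0] below_y])
next
  fix y :: real assume "y < 1"
  have c': "c \<in> {cmax..0}" using c by auto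
  have a: "0 < - eta * c" using c eta_pos by (simp add: mult_pos_neg)
  show "eventually (\<lambda>x. y < th c x) at_top"
  proof (rule ccontr)
    assume "\<not> eventually (\<lambda>x. y < th c x) at_top"
    have stuck: "th c x \<le> y" if "0 \<le> x" for x
    proof -
      obtain n where "x \<le> n" "th c n \<le> y"
        using \<open>\<not> eventually (\<lambda>x. y < th c x) at_top\<close> by (auto simp: eventually_at_top_linorder not_less)
      then show ?thesis using th_mono[OF assms that \<open>x \<le> n\<close>] by simp
    qed
    then have "0 \<le> y" using th_range[OF assms, of 0] theta_s_bounds[OF c] by force
    then obtain z where "z \<in> {0..y}" and min: "\<forall>t\<in>{0..y}. Psi z \<le> Psi t"
      using continuous_attains_inf[OF compact_Icc, of 0 y Psi] continuous_on_subset[OF Psi_continuous, of "{0..y}"]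
        \<open>y < 1\<close> by auto
    have "0 < Psi z" using Psi_pos \<open>z \<in> {0..y}\<close> \<open>y < 1\<close> by simp
    have slope_ge: "Psi z / (- eta * c) \<le> dth c x0" if "0 \<le> x0" for x0
    proof -
      have "Psi z \<le> - eta * c * dth c x0"
      proof (rule DERIV_le_affine_positive_imp_ge[where p="\<lambda>x. dth c x"
                   and p'="\<lambda>z. - eta * c * dth c z - Psi (clamp 0 1 (th c z))"])
        show "((\<lambda>x. dth c x) has_real_derivative - eta * c * dth c w - Psi (clamp 0 1 (th c w))) (at w within {x0..})"
          if "x0 \<le> w" for w
          by (rule DERIV_subset[OF dth_has_derivative[OF c']]) (use that \<open>0 \<le> x0\<close> in auto)
        show "0 < dth c w" if "x0 \<le> w" for w
          using trapped_orbit[OF assms, of w] that \<open>0 \<le> x0\<close> by simp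
        show "- eta * c * dth c w - Psi (clamp 0 1 (th c w)) \<le> - eta * c * dth c w - Psi z" if "x0 \<le> w" for w
          using min th_range[OF assms, of w] stuck[of w] theta_s_bounds[OF c] that \<open>0 \<le> x0\<close> by simp
      qed (use a in simp)
      then show ?thesis using pos_divide_le_eq[OF a] by (metis mult.commute)
    qed
    show False
      by (rule trapped_dth_not_bounded_below[OF assms order.refl divide_pos_pos[OF \<open>0 < Psi z\<close> a] slope_ge])
  qed
qed

lemma dth_tendsto_0:
  assumes c: "c \<in> {cmax<..<0}" and "\<not> turns_back c" "\<not> overshoots c"
  shows "((\<lambda>x. dth c x) \<longlongrightarrow> 0) at_top"
proof (rule order_tendstoI)
  fix y :: real assume "y < 0"
  have above_y: "y < dth c x" if "0 \<le> x" for x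
    using trapped_orbit[OF assms that] \<open>y < 0\<close> by simp
  show "eventually (\<lambda>x. y < dth c x) at_top"
    by (rule eventually_mono[OF eventually_ge_at_top[of 0] above_y])
next
  fix e :: real assume "0 < e"
  have c': "c \<in> {cmax..0}" using c by auto
  have a: "0 < - eta * c" using c eta_pos by (simp add: mult_pos_neg)
  have "isCont (\<lambda>t. Psi (clamp 0 1 t)) 1"
    using clamp_continuous_at[of 0 1 Psi] Psi_continuous by simp
  then have "((\<lambda>x. Psi (clamp 0 1 (th c x))) \<longlongrightarrow> 0) at_top"
    using isCont_tendsto_compose[OF _ th_tendsto_1[OF assms]] Psi_1 by fastforce
  moreover have "0 < - eta * c * e / 2"
    using mult_pos_pos[OF a \<open>0 < e\<close>] by simp
  ultimately have "eventually (\<lambda>x. Psi (clamp 0 1 (th c x)) < - eta * c * e / 2) at_top"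
    by (rule order_tendstoD)
  then obtain N where N: "\<And>x. N \<le> x \<Longrightarrow> Psi (clamp 0 1 (th c x)) < - eta * c * e / 2"
    by (auto simp: eventually_at_top_linorder)
  show "eventually (\<lambda>x. dth c x < e) at_top"
  proof (rule ccontr)
    assume "\<not> eventually (\<lambda>x. dth c x < e) at_top"
    then have "\<forall>M. \<exists>n\<ge>M. e \<le> dth c n"
      by (simp add: eventually_at_top_linorder not_less)
    then obtain x0 where "max N 0 \<le> x0" "e \<le> dth c x0"
      by blast
    then have "0 \<le> x0" "N \<le> x0" by auto
    have growth: "e + - eta * c * e / 2 * (z - x0) \<le> dth c z" if "x0 \<le> z" for z
    proof (rule DERIV_barrier_linear_growth[where f="\<lambda>x. dth c x", OF _ \<open>e \<le> dth c x0\<close>])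
      show "((\<lambda>x. dth c x) has_real_derivative - eta * c * dth c w - Psi (clamp 0 1 (th c w))) (at w within {x0..})"
        if "x0 \<le> w" for w
        by (rule DERIV_subset[OF dth_has_derivative[OF c']]) (use that \<open>0 \<le> x0\<close> in auto)
      show "- eta * c * e / 2 \<le> - eta * c * dth c w - Psi (clamp 0 1 (th c w))"
        if "x0 \<le> w" "e \<le> dth c w" for w
        using N[of w] mult_left_mono[OF that(2) less_imp_le[OF a]] that \<open>N \<le> x0\<close> by simp
    qed (use \<open>0 < - eta * c * e / 2\<close> that in auto)
    have nonneg: "0 \<le> - eta * c * e / 2 * (z - x0)" if "x0 \<le> z" for z
      using \<open>0 < - eta * c * e / 2\<close> that by (intro mult_nonneg_nonneg) auto
    have "e \<le> dth c z" if "x0 \<le> z" for z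
      using growth[OF that] nonneg[OF that] by linarith
    then show False
      by (rule trapped_dth_not_bounded_below[OF assms \<open>0 \<le> x0\<close> \<open>0 < e\<close>])
  qed
qed

lemma exists_solution: "\<exists>c\<in>{cmax..0}. \<exists>theta. solves_Pc eta Qg Qp Psi theta_s c theta"
proof -
  obtain c where c: "c \<in> {cmax<..<0}" and trapped: "\<not> turns_back c" "\<not> overshoots c"
    using exists_trapped_speed by blast
  have c': "c \<in> {cmax..0}" using c by auto
  have range: "th c x \<in> {0..1}" if "0 \<le> x" for x
    using th_range[OF c trapped that] theta_s_bounds[OF c] by auto
  have "\<exists>theta. solves_Pc eta Qg Qp Psi theta_s c theta"
  proof (rule solves_Pc_of_gas_branch[where t="\<lambda>x. th c x" and p="\<lambda>x. dth c x"])
    show "((\<lambda>x. dth c x) has_real_derivative - eta * c * dth c x - Psi (th c x)) (at x within {0..})"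
      if "0 \<le> x" for x
      using dth_has_derivative[OF c' that] range[OF that] by simp
    show "th c 0 = theta_s c" "dth c 0 = Sfun eta Qg Qp c - eta * c * theta_s c"
      using orbit_0[OF c'] by (simp_all add: init_def)
    show "th c x \<in> {0..1}" if "0 \<le> x" for x
      by (rule range[OF that])
    show "((\<lambda>x. th c x) has_real_derivative dth c x) (at x within {0..})" if "0 \<le> x" for x
      by (rule th_has_derivative[OF c' that])
  qed (use c Psi_continuous th_tendsto_1[OF c trapped] dth_tendsto_0[OF c trapped] in auto)
  then show ?thesis using c' by blast
qed

end

theorem proposition6:
  fixes eta Qg Qp cmax :: real and Psi theta_s :: "real \<Rightarrow> real"
  assumes eta_pos: "eta > 0"
    and Qg_pos: "Qg > 0"
    and Qp_gt: "Qp > - Qg"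
    and Psi_smooth: "smooth_within Psi {0..1}"
    and Psi_nonneg: "\<forall>t\<in>{0..1}. Psi t \<ge> 0"
    and Psi_pos: "\<forall>t\<in>{0..<1}. Psi t > 0"
    and Psi_1: "Psi 1 = 0"
    and cmax_neg: "cmax < 0"
    and ths_range: "\<forall>c\<in>{cmax..0}. theta_s c \<in> {0..1}"
    and ths_cont: "continuous_on {cmax..0} theta_s"
    and ths_decr: "strict_antimono_on {cmax..0} theta_s"
    and ths_0: "theta_s 0 = 0"
    and ths_cmax: "theta_s cmax = 1"
    and ths_smooth: "smooth_within theta_s {cmax..<0}"
    and ths_deriv_neg: "\<forall>c\<in>{cmax..<0}. \<exists>d. (theta_s has_real_derivative d) (at c within {cmax..<0}) \<and> d < 0"
  shows "(\<exists>c\<in>{cmax..0}. \<exists>theta. solves_Pc eta Qg Qp Psi theta_s c theta) \<and>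
         (\<forall>c\<in>{cmax..0}. (\<exists>theta. solves_Pc eta Qg Qp Psi theta_s c theta) \<longrightarrow> c \<in> {cmax<..<0})"
proof
  obtain Lp where "Lp-lipschitz_on {0..1} Psi"
    using smooth_within_imp_lipschitz[OF Psi_smooth] .
  then interpret shooting eta Qg Qp cmax Lp Psi theta_s
    using eta_pos Qg_pos Qp_gt Psi_pos Psi_1 cmax_neg ths_cont ths_decr ths_0 ths_cmax
    by unfold_locales auto
  show "\<exists>c\<in>{cmax..0}. \<exists>theta. solves_Pc eta Qg Qp Psi theta_s c theta"
    by (rule exists_solution)
next
  show "\<forall>c\<in>{cmax..0}. (\<exists>theta. solves_Pc eta Qg Qp Psi theta_s c theta) \<longrightarrow> c \<in> {cmax<..<0}"
    using no_solution_at_cmax[where theta_s=theta_s and cmax=cmax, OF eta_pos Qg_pos Qp_gt cmax_neg ths_cmax]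
      no_solution_at_0[where Psi=Psi and theta_s=theta_s, OF Psi_nonneg ths_0]
    by (metis atLeastAtMost_iff greaterThanLessThan_iff order.order_iff_strict)
qed

end
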